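(* Let $S$ be a semigroup and let $\mathcal{R}'$ and $\leq_l$ be binary relations on $S$. Write $\mathcal{L}'$ for the relation $\leq_l \cap \geq_l$, write $L'_a$ for the $\mathcal{L}'$-class of $a\in S$, and (when $\leq_l$ is a preorder) write $\wedge$ for the meet of $\mathcal{L}'$-classes with respect to the partial order on $S/\mathcal{L}'$ induced by $\leq_l$, where such meets exist. Then $S$ has a semigroup of straight left I-quotients $Q$ (i.e. $S$ embeds as a straight left I-order in an inverse semigroup $Q$) such that \[\mathcal{R}^Q\cap(S\times S)=\mathcal{R}' \quad\text{and}\quad \leq_{\mathcal{L}^Q}\cap\,(S\times S)=\ \leq_l\] if and only if all of the following hold: $\mathcal{R}'$ is a left compatible equivalence relation on $S$; $\leq_l$ is a preorder on $S$ such that the $\mathcal{L}'$-classes form a meet semilattice under the associated partial order; and $S$ satisfies: \begin{itemize} \item[(M1)] For all $\alpha,\beta\in S$ there exist $\gamma,\delta\in S$ such that $\gamma\,\mathcal{R}'\,\delta\,\mathcal{R}'\,\delta\beta=\gamma\alpha$ and $L'_\alpha\wedge L'_\beta=L'_{\gamma\alpha}$. \item[(M2)] For all $\alpha,\beta,\gamma,\delta\in S$, $L'_\alpha\wedge L'_\beta=L'_\gamma$ implies $L'_{\alpha\delta}\wedge L'_{\beta\delta}=L'_{\gamma\delta}$. \item[(M3)] For all $\alpha,\beta\in S$, $\alpha\beta\leq_l\beta$. \item[(M4)] $\mathcal{R}'\subseteq\mathcal{R}^*$. \item[(M5)] For all $\alpha,\beta,\gamma,\delta\in S$ with $\gamma\,\mathcal{R}'\,\gamma\alpha\,\mathcal{L}'\,\alpha$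 and $\delta\,\mathcal{R}'\,\delta\beta\,\mathcal{L}'\,\beta$, we have $\gamma\,\mathcal{L}'\,\delta$ if and only if $\alpha\,\mathcal{R}'\,\beta$. \item[(M6)] For all $\alpha,\beta,\gamma\in S$, $\alpha\,\mathcal{L}'\,\beta\,\mathcal{L}'\,\gamma\alpha=\gamma\beta$ implies $\alpha=\beta$. \end{itemize}
   Context: For an element $a$ of an inverse semigroup $Q$, $a^{-1}$ denotes its unique inverse. A subsemigroup $S$ of an inverse semigroup $Q$ is a left I-order in $Q$ (and $Q$ a semigroup of left I-quotients of $S$) if every $q\in Q$ can be written $q=a^{-1}b$ with $a,b\in S$; it is straight (and $Q$ a semigroup of straight left I-quotients) if moreover $a,b$ can always be chosen with $a\,\mathcal{R}\,b$ in $Q$. $\mathcal{R}^Q$, $\mathcal{L}^Q$ denote Green's relations of $Q$ and $\leq_{\mathcal{L}^Q}$ the preorder $a\leq_{\mathcal{L}^Q}b \iff Q^1a\subseteq Q^1b$. On $S$, $\mathcal{R}^*$ is the relation: $a\,\mathcal{R}^*\,b$ iff for all $x,y\in S^1$, $xa=ya \Leftrightarrow xb=yb$. A relation is left compatible if $a\,\rho\,b$ implies $ca\,\rho\,cb$ for all $c\in S$. *)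

theory Defs
  imports Main
begin

definition is_semigroup :: "'q set \<Rightarrow> ('q \<Rightarrow> 'q \<Rightarrow> 'q) \<Rightarrow> bool" where
  "is_semigroup Q m \<longleftrightarrow>
     (\<forall>a\<in>Q. \<forall>b\<in>Q. m a b \<in> Q) \<and>
     (\<forall>a\<in>Q. \<forall>b\<in>Q. \<forall>c\<in>Q. m (m a b) c = m a (m b c))"

definition is_inverse_in :: "'q set \<Rightarrow> ('q \<Rightarrow> 'q \<Rightarrow> 'q) \<Rightarrow> 'q \<Rightarrow> 'q \<Rightarrow> bool" where
  "is_inverse_in Q m a b \<longleftrightarrow> b \<in> Q \<and> m (m a b) a = a \<and> m (m b a) b = b"

definition inverse_semigroup :: "'q set \<Rightarrow> ('q \<Rightarrow> 'q \<Rightarrow> 'q) \<Rightarrow> bool" where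
  "inverse_semigroup Q m \<longleftrightarrow> is_semigroup Q m \<and> (\<forall>a\<in>Q. \<exists>!b. is_inverse_in Q m a b)"

definition inv_in :: "'q set \<Rightarrow> ('q \<Rightarrow> 'q \<Rightarrow> 'q) \<Rightarrow> 'q \<Rightarrow> 'q" where
  "inv_in Q m a = (THE b. is_inverse_in Q m a b)"

(* a \<le>_{R^Q} b  iff  a Q^1 \<subseteq> b Q^1 *)
definition leR_in :: "'q set \<Rightarrow> ('q \<Rightarrow> 'q \<Rightarrow> 'q) \<Rightarrow> 'q \<Rightarrow> 'q \<Rightarrow> bool" where
  "leR_in Q m a b \<longleftrightarrow> a = b \<or> (\<exists>x\<in>Q. a = m b x)"

(* a \<le>_{L^Q} b  iff  Q^1 a \<subseteq> Q^1 b *)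
definition leL_in :: "'q set \<Rightarrow> ('q \<Rightarrow> 'q \<Rightarrow> 'q) \<Rightarrow> 'q \<Rightarrow> 'q \<Rightarrow> bool" where
  "leL_in Q m a b \<longleftrightarrow> a = b \<or> (\<exists>x\<in>Q. a = m x b)"

definition greenR_in :: "'q set \<Rightarrow> ('q \<Rightarrow> 'q \<Rightarrow> 'q) \<Rightarrow> 'q \<Rightarrow> 'q \<Rightarrow> bool" where
  "greenR_in Q m a b \<longleftrightarrow> leR_in Q m a b \<and> leR_in Q m b a"

definition straight_left_I_order_embedding ::
  "('a::semigroup_mult \<Rightarrow> 'q) \<Rightarrow> 'q set \<Rightarrow> ('q \<Rightarrow> 'q \<Rightarrow> 'q) \<Rightarrow> bool" where
  "straight_left_I_order_embedding f Q m \<longleftrightarrow>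
     inverse_semigroup Q m \<and> inj f \<and> range f \<subseteq> Q \<and>
     (\<forall>a b. f (a * b) = m (f a) (f b)) \<and>
     (\<forall>q\<in>Q. \<exists>a b. q = m (inv_in Q m (f a)) (f b) \<and> greenR_in Q m (f a) (f b))"

(* multiplication by an element of S^1 = S \<union> {1}; None represents the adjoined identity *)
definition mult1 :: "'a option \<Rightarrow> 'a::semigroup_mult \<Rightarrow> 'a" where
  "mult1 x a = (case x of None \<Rightarrow> a | Some y \<Rightarrow> y * a)"

definition Rstar :: "'a::semigroup_mult \<Rightarrow> 'a \<Rightarrow> bool" where
  "Rstar a b \<longleftrightarrow> (\<forall>x y. mult1 x a = mult1 y a \<longleftrightarrow> mult1 x b = mult1 y b)"

definition left_compatible :: "('a::semigroup_mult \<Rightarrow> 'a \<Rightarrow> bool) \<Rightarrow> bool" where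
  "left_compatible r \<longleftrightarrow> (\<forall>a b c. r a b \<longrightarrow> r (c * a) (c * b))"

definition equivalence_rel :: "('a \<Rightarrow> 'a \<Rightarrow> bool) \<Rightarrow> bool" where
  "equivalence_rel r \<longleftrightarrow> (\<forall>a. r a a) \<and> (\<forall>a b. r a b \<longrightarrow> r b a) \<and>
                        (\<forall>a b c. r a b \<longrightarrow> r b c \<longrightarrow> r a c)"

definition preorder_rel :: "('a \<Rightarrow> 'a \<Rightarrow> bool) \<Rightarrow> bool" where
  "preorder_rel r \<longleftrightarrow> (\<forall>a. r a a) \<and> (\<forall>a b c. r a b \<longrightarrow> r b c \<longrightarrow> r a c)"

definition Lprime :: "('a \<Rightarrow> 'a \<Rightarrow> bool) \<Rightarrow> 'a \<Rightarrow> 'a \<Rightarrow> bool" where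
  "Lprime le a b \<longleftrightarrow> le a b \<and> le b a"

(* "L'_a \<and> L'_b = L'_c": the L'-class of c is the meet of the L'-classes of a and b in the
   poset S/L' ordered by L'_x \<le> L'_y iff x \<le>_l y (written out on representatives) *)
definition is_meet :: "('a \<Rightarrow> 'a \<Rightarrow> bool) \<Rightarrow> 'a \<Rightarrow> 'a \<Rightarrow> 'a \<Rightarrow> bool" where
  "is_meet le a b c \<longleftrightarrow> le c a \<and> le c b \<and> (\<forall>d. le d a \<longrightarrow> le d b \<longrightarrow> le d c)"

definition meet_semilattice_classes :: "('a \<Rightarrow> 'a \<Rightarrow> bool) \<Rightarrow> bool" where
  "meet_semilattice_classes le \<longleftrightarrow> (\<forall>a b. \<exists>c. is_meet le a b c)"

definition M1 :: "('a::semigroup_mult \<Rightarrow> 'a \<Rightarrow> bool) \<Rightarrow> ('a \<Rightarrow> 'a \<Rightarrow> bool) \<Rightarrow> bool" where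
  "M1 R le \<longleftrightarrow> (\<forall>\<alpha> \<beta>. \<exists>\<gamma> \<delta>. R \<gamma> \<delta> \<and> R \<delta> (\<delta> * \<beta>) \<and> \<delta> * \<beta> = \<gamma> * \<alpha> \<and>
                    is_meet le \<alpha> \<beta> (\<gamma> * \<alpha>))"

definition M2 :: "('a::semigroup_mult \<Rightarrow> 'a \<Rightarrow> bool) \<Rightarrow> bool" where
  "M2 le \<longleftrightarrow> (\<forall>\<alpha> \<beta> \<gamma> \<delta>. is_meet le \<alpha> \<beta> \<gamma> \<longrightarrow> is_meet le (\<alpha> * \<delta>) (\<beta> * \<delta>) (\<gamma> * \<delta>))"

definition M3 :: "('a::semigroup_mult \<Rightarrow> 'a \<Rightarrow> bool) \<Rightarrow> bool" where
  "M3 le \<longleftrightarrow> (\<forall>\<alpha> \<beta>. le (\<alpha> * \<beta>) \<beta>)"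

definition M4 :: "('a::semigroup_mult \<Rightarrow> 'a \<Rightarrow> bool) \<Rightarrow> bool" where
  "M4 R \<longleftrightarrow> (\<forall>a b. R a b \<longrightarrow> Rstar a b)"

definition M5 :: "('a::semigroup_mult \<Rightarrow> 'a \<Rightarrow> bool) \<Rightarrow> ('a \<Rightarrow> 'a \<Rightarrow> bool) \<Rightarrow> bool" where
  "M5 R le \<longleftrightarrow> (\<forall>\<alpha> \<beta> \<gamma> \<delta>.
      R \<gamma> (\<gamma> * \<alpha>) \<longrightarrow> Lprime le (\<gamma> * \<alpha>) \<alpha> \<longrightarrow>
      R \<delta> (\<delta> * \<beta>) \<longrightarrow> Lprime le (\<delta> * \<beta>) \<beta> \<longrightarrow>
      (Lprime le \<gamma> \<delta> \<longleftrightarrow> R \<alpha> \<beta>))"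

definition M6 :: "('a::semigroup_mult \<Rightarrow> 'a \<Rightarrow> bool) \<Rightarrow> bool" where
  "M6 le \<longleftrightarrow> (\<forall>\<alpha> \<beta> \<gamma>. Lprime le \<alpha> \<beta> \<longrightarrow> Lprime le \<beta> (\<gamma> * \<alpha>) \<longrightarrow> \<gamma> * \<alpha> = \<gamma> * \<beta> \<longrightarrow> \<alpha> = \<beta>)"

end

theory Submission
  imports Defs
begin

text \<open>Necessity: in an inverse semigroup Green's \<open>\<R>\<close> and the \<open>\<L>\<close>-preorder are read off the
  commuting idempotents \<open>a a\<^sup>-\<^sup>1\<close> and \<open>a\<^sup>-\<^sup>1 a\<close>, meets of \<open>\<L>\<close>-classes become products of
  idempotents, and (M1) comes from a straight decomposition \<open>\<alpha> \<beta>\<^sup>-\<^sup>1 = \<gamma>\<^sup>-\<^sup>1 \<delta>\<close>.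

  Sufficiency: the semigroup of left I-quotients consists of the pairs \<open>(a, b)\<close> with
  \<open>a \<R>' b\<close>, read as \<open>a\<^sup>-\<^sup>1 b\<close>, modulo the identification of pairs that are
  \<open>\<L>'\<close>-related in the first component and agree under all common left multiples. The product \<open>(a, b) (c, d) = (\<gamma> a, \<delta> d)\<close> uses a
  common left multiple \<open>\<gamma> b = \<delta> c\<close> realising \<open>L'\<^sub>b \<and> L'\<^sub>c\<close> (M1). Every \<open>s\<close> has a
  denominator \<open>g\<close> with \<open>g \<R>' g s \<L>' s\<close>, unique up to \<open>\<L>'\<close> by (M5), and \<open>s\<close> embeds
  as \<open>(g, g s)\<close>; (M4) and (M6) supply the right and left cancellations that make everything
  well defined.\<close>

section \<open>Inverse semigroups\<close>

locale inv_semigroup =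
  fixes Q :: "'q set" and m :: "'q \<Rightarrow> 'q \<Rightarrow> 'q" (infixl "\<cdot>" 70)
  assumes inverse_semigroup: "inverse_semigroup Q m"
begin

abbreviation inv_Q :: "'q \<Rightarrow> 'q" (\<open>_\<^sup>-\<^sup>1\<close> [1000] 1000) where
  "x\<^sup>-\<^sup>1 \<equiv> inv_in Q m x"

lemma m_closed [simp]: "x \<in> Q \<Longrightarrow> y \<in> Q \<Longrightarrow> x \<cdot> y \<in> Q"
  using inverse_semigroup unfolding inverse_semigroup_def is_semigroup_def by blast

lemma m_assoc [simp]: "x \<in> Q \<Longrightarrow> y \<in> Q \<Longrightarrow> z \<in> Q \<Longrightarrow> x \<cdot> y \<cdot> z = x \<cdot> (y \<cdot> z)"
  using inverse_semigroup unfolding inverse_semigroup_def is_semigroup_def by blast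

lemma is_inverse_in_inv: "x \<in> Q \<Longrightarrow> is_inverse_in Q m x (x\<^sup>-\<^sup>1)"
  unfolding inv_in_def using inverse_semigroup unfolding inverse_semigroup_def
  by (blast intro: theI')

lemma inv_unique: "x \<in> Q \<Longrightarrow> is_inverse_in Q m x y \<Longrightarrow> y = x\<^sup>-\<^sup>1"
  using is_inverse_in_inv inverse_semigroup unfolding inverse_semigroup_def by blast

lemma inv_closed [simp]: "x \<in> Q \<Longrightarrow> x\<^sup>-\<^sup>1 \<in> Q"
  using is_inverse_in_inv unfolding is_inverse_in_def by blast

lemma mult_inv_mult [simp]: "x \<in> Q \<Longrightarrow> x \<cdot> (x\<^sup>-\<^sup>1 \<cdot> x) = x"
  using is_inverse_in_inv[of x] unfolding is_inverse_in_def by simp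

lemma inv_mult_inv [simp]: "x \<in> Q \<Longrightarrow> x\<^sup>-\<^sup>1 \<cdot> (x \<cdot> x\<^sup>-\<^sup>1) = x\<^sup>-\<^sup>1"
  using is_inverse_in_inv[of x] unfolding is_inverse_in_def by simp

lemma assoc_left_mult: "x \<in> Q \<Longrightarrow> y \<in> Q \<Longrightarrow> z \<in> Q \<Longrightarrow> x \<cdot> y = w \<Longrightarrow> x \<cdot> (y \<cdot> z) = w \<cdot> z"
  by (metis m_assoc)

lemma mult_inv_mult_assoc [simp]: "x \<in> Q \<Longrightarrow> z \<in> Q \<Longrightarrow> x \<cdot> (x\<^sup>-\<^sup>1 \<cdot> (x \<cdot> z)) = x \<cdot> z"
  by (metis m_assoc m_closed inv_closed mult_inv_mult)

lemma inv_mult_inv_assoc [simp]: "x \<in> Q \<Longrightarrow> z \<in> Q \<Longrightarrow> x\<^sup>-\<^sup>1 \<cdot> (x \<cdot> (x\<^sup>-\<^sup>1 \<cdot> z)) = x\<^sup>-\<^sup>1 \<cdot> z"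
  by (metis m_assoc m_closed inv_closed inv_mult_inv)

lemma inv_eqI: "x \<in> Q \<Longrightarrow> y \<in> Q \<Longrightarrow> x \<cdot> (y \<cdot> x) = x \<Longrightarrow> y \<cdot> (x \<cdot> y) = y \<Longrightarrow> x\<^sup>-\<^sup>1 = y"
  by (rule inv_unique[symmetric]) (auto simp: is_inverse_in_def)

lemma inv_inv [simp]: "x \<in> Q \<Longrightarrow> x\<^sup>-\<^sup>1\<^sup>-\<^sup>1 = x"
  by (rule inv_eqI) simp_all

definition idem :: "'q \<Rightarrow> bool" where
  "idem e \<longleftrightarrow> e \<in> Q \<and> e \<cdot> e = e"

lemma idem_closed: "idem e \<Longrightarrow> e \<in> Q"
  by (simp add: idem_def)

lemma idem_assoc: "idem e \<Longrightarrow> z \<in> Q \<Longrightarrow> e \<cdot> (e \<cdot> z) = e \<cdot> z"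
  unfolding idem_def by (metis assoc_left_mult)

lemma idem_inv_mult [simp]: "x \<in> Q \<Longrightarrow> idem (x\<^sup>-\<^sup>1 \<cdot> x)"
  by (simp add: idem_def)

lemma idem_mult_inv [simp]: "x \<in> Q \<Longrightarrow> idem (x \<cdot> x\<^sup>-\<^sup>1)"
  by (simp add: idem_def)

lemma inv_idem: "idem e \<Longrightarrow> e\<^sup>-\<^sup>1 = e"
  by (rule inv_eqI) (auto simp: idem_def idem_assoc)

text \<open>The classical argument: for \<open>x = (e f)\<^sup>-\<^sup>1\<close>, uniqueness of inverses forces
  \<open>f x e = x\<close>, whence \<open>x\<close> is idempotent and so is its inverse \<open>e f\<close>.\<close>

lemma idem_mult:
  assumes e: "idem e" and f: "idem f"
  shows "idem (e \<cdot> f)"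
proof -
  have eQ: "e \<in> Q" and fQ: "f \<in> Q" using e f by (simp_all add: idem_closed)
  define x where "x = (e \<cdot> f)\<^sup>-\<^sup>1"
  have xQ: "x \<in> Q" unfolding x_def using eQ fQ by simp
  have efx: "e \<cdot> (f \<cdot> (x \<cdot> (e \<cdot> f))) = e \<cdot> f"
    using mult_inv_mult[of "e \<cdot> f"] eQ fQ unfolding x_def by (simp del: mult_inv_mult)
  have xef: "x \<cdot> (e \<cdot> (f \<cdot> x)) = x"
    using inv_mult_inv[of "e \<cdot> f"] eQ fQ unfolding x_def by (simp del: inv_mult_inv)
  have xefz: "x \<cdot> (e \<cdot> (f \<cdot> (x \<cdot> z))) = x \<cdot> z" if "z \<in> Q" for z
    using assoc_left_mult[OF xQ _ that xef] eQ fQ xQ that by simp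
  have "(e \<cdot> f)\<^sup>-\<^sup>1 = f \<cdot> (x \<cdot> e)"
  proof (rule inv_eqI)
    show "e \<cdot> f \<cdot> (f \<cdot> (x \<cdot> e) \<cdot> (e \<cdot> f)) = e \<cdot> f"
      using eQ fQ xQ efx by (simp add: idem_assoc e f)
    show "f \<cdot> (x \<cdot> e) \<cdot> (e \<cdot> f \<cdot> (f \<cdot> (x \<cdot> e))) = f \<cdot> (x \<cdot> e)"
      using eQ fQ xQ xefz by (simp add: idem_assoc e f)
  qed (use eQ fQ xQ in simp_all)
  then have fxe: "x = f \<cdot> (x \<cdot> e)" unfolding x_def .
  then have "x \<cdot> x = f \<cdot> (x \<cdot> (e \<cdot> (f \<cdot> x)) \<cdot> e)"
    using eQ fQ xQ by (metis m_assoc m_closed)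
  also have "\<dots> = x" using xef fxe by simp
  finally have "idem x" using xQ by (simp add: idem_def)
  then have "x\<^sup>-\<^sup>1 = x" by (rule inv_idem)
  then show ?thesis using \<open>idem x\<close> eQ fQ unfolding x_def by simp
qed

lemma idem_commute:
  assumes e: "idem e" and f: "idem f"
  shows "e \<cdot> f = f \<cdot> e"
proof -
  have eQ: "e \<in> Q" and fQ: "f \<in> Q" using e f by (simp_all add: idem_closed)
  have ef: "e \<cdot> (f \<cdot> (e \<cdot> f)) = e \<cdot> f" and fe: "f \<cdot> (e \<cdot> (f \<cdot> e)) = f \<cdot> e"
    using idem_mult[OF e f] idem_mult[OF f e] eQ fQ by (simp_all add: idem_def)
  have "(e \<cdot> f)\<^sup>-\<^sup>1 = f \<cdot> e"
    by (rule inv_eqI) (use eQ fQ ef fe in \<open>simp_all add: idem_assoc e f\<close>)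
  moreover have "(e \<cdot> f)\<^sup>-\<^sup>1 = e \<cdot> f" by (rule inv_idem[OF idem_mult[OF e f]])
  ultimately show ?thesis by simp
qed

lemma idem_commute_assoc: "idem e \<Longrightarrow> idem f \<Longrightarrow> z \<in> Q \<Longrightarrow> e \<cdot> (f \<cdot> z) = f \<cdot> (e \<cdot> z)"
  by (metis idem_closed idem_commute m_assoc)

lemma inv_mult:
  assumes q: "x \<in> Q" "y \<in> Q"
  shows "(x \<cdot> y)\<^sup>-\<^sup>1 = y\<^sup>-\<^sup>1 \<cdot> x\<^sup>-\<^sup>1"
proof (rule inv_eqI)
  show "x \<cdot> y \<cdot> (y\<^sup>-\<^sup>1 \<cdot> x\<^sup>-\<^sup>1 \<cdot> (x \<cdot> y)) = x \<cdot> y"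
    using idem_commute_assoc[of "y \<cdot> y\<^sup>-\<^sup>1" "x\<^sup>-\<^sup>1 \<cdot> x" y] q by simp
  show "y\<^sup>-\<^sup>1 \<cdot> x\<^sup>-\<^sup>1 \<cdot> (x \<cdot> y \<cdot> (y\<^sup>-\<^sup>1 \<cdot> x\<^sup>-\<^sup>1)) = y\<^sup>-\<^sup>1 \<cdot> x\<^sup>-\<^sup>1"
    using idem_commute_assoc[of "x\<^sup>-\<^sup>1 \<cdot> x" "y \<cdot> y\<^sup>-\<^sup>1" "x\<^sup>-\<^sup>1"] q by simp
qed (use q in simp_all)

lemma leR_in_iff: "x \<in> Q \<Longrightarrow> y \<in> Q \<Longrightarrow> leR_in Q m x y \<longleftrightarrow> x = y \<cdot> (y\<^sup>-\<^sup>1 \<cdot> x)"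
  unfolding leR_in_def by (metis inv_closed m_closed mult_inv_mult mult_inv_mult_assoc)

lemma greenR_in_iff:
  assumes q: "x \<in> Q" "y \<in> Q"
  shows "greenR_in Q m x y \<longleftrightarrow> x \<cdot> x\<^sup>-\<^sup>1 = y \<cdot> y\<^sup>-\<^sup>1"
proof
  assume "greenR_in Q m x y"
  then have x: "x = y \<cdot> (y\<^sup>-\<^sup>1 \<cdot> x)" and y: "y = x \<cdot> (x\<^sup>-\<^sup>1 \<cdot> y)"
    using q by (simp_all add: greenR_in_def leR_in_iff)
  have "x \<cdot> x\<^sup>-\<^sup>1 = (y \<cdot> y\<^sup>-\<^sup>1) \<cdot> (x \<cdot> x\<^sup>-\<^sup>1)"
    using arg_cong[OF x, of "\<lambda>t. t \<cdot> x\<^sup>-\<^sup>1"] q by simp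
  also have "\<dots> = (x \<cdot> x\<^sup>-\<^sup>1) \<cdot> (y \<cdot> y\<^sup>-\<^sup>1)" using q by (simp add: idem_commute)
  also have "\<dots> = y \<cdot> y\<^sup>-\<^sup>1"
    using arg_cong[OF y, of "\<lambda>t. t \<cdot> y\<^sup>-\<^sup>1"] q by simp
  finally show "x \<cdot> x\<^sup>-\<^sup>1 = y \<cdot> y\<^sup>-\<^sup>1" .
next
  assume h: "x \<cdot> x\<^sup>-\<^sup>1 = y \<cdot> y\<^sup>-\<^sup>1"
  have "x = y \<cdot> (y\<^sup>-\<^sup>1 \<cdot> x)" using arg_cong[OF h, of "\<lambda>t. t \<cdot> x"] q by simp
  moreover have "y = x \<cdot> (x\<^sup>-\<^sup>1 \<cdot> y)" using arg_cong[OF h, of "\<lambda>t. t \<cdot> y"] q by simp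
  ultimately show "greenR_in Q m x y" using q by (simp add: greenR_in_def leR_in_iff)
qed

lemma leL_in_iff:
  assumes q: "x \<in> Q" "y \<in> Q"
  shows "leL_in Q m x y \<longleftrightarrow> x = x \<cdot> (y\<^sup>-\<^sup>1 \<cdot> y)"
proof
  assume "leL_in Q m x y"
  then consider "x = y" | z where "z \<in> Q" "x = z \<cdot> y" unfolding leL_in_def by blast
  then show "x = x \<cdot> (y\<^sup>-\<^sup>1 \<cdot> y)" by cases (use q in simp_all)
next
  assume h: "x = x \<cdot> (y\<^sup>-\<^sup>1 \<cdot> y)"
  have "x = (x \<cdot> y\<^sup>-\<^sup>1) \<cdot> y" using q by (subst h) simp
  then show "leL_in Q m x y" unfolding leL_in_def using q by (blast intro: m_closed inv_closed)
qed

lemma leL_in_iff_idem: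
  assumes q: "x \<in> Q" "y \<in> Q"
  shows "leL_in Q m x y \<longleftrightarrow> x\<^sup>-\<^sup>1 \<cdot> x = x\<^sup>-\<^sup>1 \<cdot> x \<cdot> (y\<^sup>-\<^sup>1 \<cdot> y)"
  unfolding leL_in_iff[OF q]
proof
  assume h: "x = x \<cdot> (y\<^sup>-\<^sup>1 \<cdot> y)"
  show "x\<^sup>-\<^sup>1 \<cdot> x = x\<^sup>-\<^sup>1 \<cdot> x \<cdot> (y\<^sup>-\<^sup>1 \<cdot> y)"
    using arg_cong[OF h, of "\<lambda>t. x\<^sup>-\<^sup>1 \<cdot> t"] q by simp
next
  assume h: "x\<^sup>-\<^sup>1 \<cdot> x = x\<^sup>-\<^sup>1 \<cdot> x \<cdot> (y\<^sup>-\<^sup>1 \<cdot> y)"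
  show "x = x \<cdot> (y\<^sup>-\<^sup>1 \<cdot> y)"
    using arg_cong[OF h, of "\<lambda>t. x \<cdot> t"] q by simp
qed

lemma leL_in_antisym_iff:
  assumes q: "x \<in> Q" "y \<in> Q"
  shows "leL_in Q m x y \<and> leL_in Q m y x \<longleftrightarrow> x\<^sup>-\<^sup>1 \<cdot> x = y\<^sup>-\<^sup>1 \<cdot> y"
  unfolding leL_in_iff_idem[OF q] leL_in_iff_idem[OF q(2,1)]
  using idem_commute[of "x\<^sup>-\<^sup>1 \<cdot> x" "y\<^sup>-\<^sup>1 \<cdot> y"] q by (auto simp: idem_assoc)

lemma idem_mult_conj: "idem e \<Longrightarrow> y \<in> Q \<Longrightarrow> y \<cdot> (y\<^sup>-\<^sup>1 \<cdot> (e \<cdot> y)) = e \<cdot> y"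
  using idem_commute_assoc[of "y \<cdot> y\<^sup>-\<^sup>1" e y] by (simp add: idem_closed)

lemma inv_mult_cancel_of_leL:
  assumes q: "x \<in> Q" "c \<in> Q" and le: "leL_in Q m x (c \<cdot> x)"
  shows "c\<^sup>-\<^sup>1 \<cdot> (c \<cdot> x) = x"
proof -
  have "x = x \<cdot> (x\<^sup>-\<^sup>1 \<cdot> (c\<^sup>-\<^sup>1 \<cdot> (c \<cdot> x)))"
    using le q by (simp add: leL_in_iff inv_mult)
  also have "\<dots> = c\<^sup>-\<^sup>1 \<cdot> (c \<cdot> x)"
    using idem_mult_conj[of "c\<^sup>-\<^sup>1 \<cdot> c" x] q by simp
  finally show ?thesis by simp
qed

lemma inv_mult_eq_of_greenR_leL:
  assumes q: "g \<in> Q" "a \<in> Q"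
    and R: "greenR_in Q m g (g \<cdot> a)" and le: "leL_in Q m a (g \<cdot> a)"
  shows "g\<^sup>-\<^sup>1 \<cdot> g = a \<cdot> a\<^sup>-\<^sup>1"
proof -
  have a: "g\<^sup>-\<^sup>1 \<cdot> (g \<cdot> a) = a" by (rule inv_mult_cancel_of_leL[OF q(2,1) le])
  have F: "g \<cdot> g\<^sup>-\<^sup>1 = g \<cdot> (a \<cdot> (a\<^sup>-\<^sup>1 \<cdot> g\<^sup>-\<^sup>1))"
    using R q by (simp add: greenR_in_iff inv_mult)
  have "g\<^sup>-\<^sup>1 \<cdot> g = g\<^sup>-\<^sup>1 \<cdot> (g \<cdot> (a \<cdot> (a\<^sup>-\<^sup>1 \<cdot> (g\<^sup>-\<^sup>1 \<cdot> g))))"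
    using arg_cong[OF F, of "\<lambda>t. g\<^sup>-\<^sup>1 \<cdot> (t \<cdot> g)"] q by simp
  also have "\<dots> = a \<cdot> (a\<^sup>-\<^sup>1 \<cdot> (g\<^sup>-\<^sup>1 \<cdot> g))"
    using a q by (metis assoc_left_mult inv_closed m_closed)
  also have "\<dots> = g\<^sup>-\<^sup>1 \<cdot> (g \<cdot> (a \<cdot> a\<^sup>-\<^sup>1))"
    using idem_commute[of "a \<cdot> a\<^sup>-\<^sup>1" "g\<^sup>-\<^sup>1 \<cdot> g"] q by simp
  also have "\<dots> = a \<cdot> a\<^sup>-\<^sup>1"
    using arg_cong[OF a, of "\<lambda>t. t \<cdot> a\<^sup>-\<^sup>1"] q by simp
  finally show ?thesis .
qed

lemma straight_quotient_mult:
  assumes q: "g \<in> Q" "d \<in> Q" "a \<in> Q" "b \<in> Q"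
    and R: "g \<cdot> g\<^sup>-\<^sup>1 = d \<cdot> d\<^sup>-\<^sup>1" and eq: "g\<^sup>-\<^sup>1 \<cdot> d = a \<cdot> b\<^sup>-\<^sup>1"
  shows "g \<cdot> a = d \<cdot> b"
    and "(g \<cdot> a)\<^sup>-\<^sup>1 \<cdot> (g \<cdot> a) = a\<^sup>-\<^sup>1 \<cdot> a \<cdot> (b\<^sup>-\<^sup>1 \<cdot> b)"
    and "d \<cdot> (b \<cdot> b\<^sup>-\<^sup>1) = d"
proof -
  have Rz: "g \<cdot> (g\<^sup>-\<^sup>1 \<cdot> z) = d \<cdot> (d\<^sup>-\<^sup>1 \<cdot> z)" if "z \<in> Q" for z
    using arg_cong[OF R, of "\<lambda>t. t \<cdot> z"] q that by simp
  have "g\<^sup>-\<^sup>1 \<cdot> g = (g\<^sup>-\<^sup>1 \<cdot> d) \<cdot> (g\<^sup>-\<^sup>1 \<cdot> d)\<^sup>-\<^sup>1"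
    using Rz[of g] q by (simp add: inv_mult)
  also have "\<dots> = a \<cdot> (b\<^sup>-\<^sup>1 \<cdot> (b \<cdot> a\<^sup>-\<^sup>1))" using q by (simp add: eq inv_mult)
  finally have Eg: "g\<^sup>-\<^sup>1 \<cdot> g = a \<cdot> (b\<^sup>-\<^sup>1 \<cdot> (b \<cdot> a\<^sup>-\<^sup>1))" .
  have "d\<^sup>-\<^sup>1 \<cdot> d = (g\<^sup>-\<^sup>1 \<cdot> d)\<^sup>-\<^sup>1 \<cdot> (g\<^sup>-\<^sup>1 \<cdot> d)"
    using Rz[of d] q by (simp add: inv_mult)
  also have "\<dots> = b \<cdot> (a\<^sup>-\<^sup>1 \<cdot> (a \<cdot> b\<^sup>-\<^sup>1))" using q by (simp add: eq inv_mult)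
  finally have Ed: "d\<^sup>-\<^sup>1 \<cdot> d = b \<cdot> (a\<^sup>-\<^sup>1 \<cdot> (a \<cdot> b\<^sup>-\<^sup>1))" .
  have "g\<^sup>-\<^sup>1 \<cdot> (g \<cdot> a) = a \<cdot> (b\<^sup>-\<^sup>1 \<cdot> (b \<cdot> (a\<^sup>-\<^sup>1 \<cdot> a)))"
    using arg_cong[OF Eg, of "\<lambda>t. t \<cdot> a"] q by simp
  also have "\<dots> = a \<cdot> (b\<^sup>-\<^sup>1 \<cdot> b)"
    using idem_commute[of "b\<^sup>-\<^sup>1 \<cdot> b" "a\<^sup>-\<^sup>1 \<cdot> a"] q by simp
  finally have ga: "g\<^sup>-\<^sup>1 \<cdot> (g \<cdot> a) = a \<cdot> (b\<^sup>-\<^sup>1 \<cdot> b)" .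
  have db: "g\<^sup>-\<^sup>1 \<cdot> (d \<cdot> b) = a \<cdot> (b\<^sup>-\<^sup>1 \<cdot> b)"
    using arg_cong[OF eq, of "\<lambda>t. t \<cdot> b"] q by simp
  have "g \<cdot> a = g \<cdot> (g\<^sup>-\<^sup>1 \<cdot> (g \<cdot> a))" using q by simp
  also have "\<dots> = d \<cdot> (d\<^sup>-\<^sup>1 \<cdot> (d \<cdot> b))" using ga db Rz[of "d \<cdot> b"] q by simp
  finally show "g \<cdot> a = d \<cdot> b" using q by simp
  show "(g \<cdot> a)\<^sup>-\<^sup>1 \<cdot> (g \<cdot> a) = a\<^sup>-\<^sup>1 \<cdot> a \<cdot> (b\<^sup>-\<^sup>1 \<cdot> b)"
    using ga q by (simp add: inv_mult)
  have "d \<cdot> (b \<cdot> b\<^sup>-\<^sup>1) = d \<cdot> (d\<^sup>-\<^sup>1 \<cdot> d) \<cdot> (b \<cdot> b\<^sup>-\<^sup>1)" using q by simp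
  also have "\<dots> = d \<cdot> (b \<cdot> (a\<^sup>-\<^sup>1 \<cdot> (a \<cdot> b\<^sup>-\<^sup>1)))" unfolding Ed using q by simp
  also have "\<dots> = d" using Ed q by (metis mult_inv_mult)
  finally show "d \<cdot> (b \<cdot> b\<^sup>-\<^sup>1) = d" .
qed

end

section \<open>Necessity\<close>

locale straight_embedding =
  fixes Q :: "'q set" and m :: "'q \<Rightarrow> 'q \<Rightarrow> 'q" (infixl "\<cdot>" 70)
    and f :: "'s::semigroup_mult \<Rightarrow> 'q"
  assumes straight_left_I_order_embedding: "straight_left_I_order_embedding f Q m"
begin

sublocale inv_semigroup Q m
  using straight_left_I_order_embedding
  by unfold_locales (simp add: straight_left_I_order_embedding_def)

lemma f_closed [simp]: "f a \<in> Q"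
  using straight_left_I_order_embedding unfolding straight_left_I_order_embedding_def by blast

lemma f_mult: "f (a * b) = f a \<cdot> f b"
  using straight_left_I_order_embedding unfolding straight_left_I_order_embedding_def by blast

lemma f_eq_iff [simp]: "f a = f b \<longleftrightarrow> a = b"
  using straight_left_I_order_embedding unfolding straight_left_I_order_embedding_def
  by (simp add: inj_eq)

lemma straight_decomposition:
  "q \<in> Q \<Longrightarrow> \<exists>a b. q = (f a)\<^sup>-\<^sup>1 \<cdot> f b \<and> greenR_in Q m (f a) (f b)"
  using straight_left_I_order_embedding unfolding straight_left_I_order_embedding_def by blast

abbreviation R_S :: "'s \<Rightarrow> 's \<Rightarrow> bool" where
  "R_S a b \<equiv> greenR_in Q m (f a) (f b)"

abbreviation le_S :: "'s \<Rightarrow> 's \<Rightarrow> bool" where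
  "le_S a b \<equiv> leL_in Q m (f a) (f b)"

lemma R_S_iff: "R_S a b \<longleftrightarrow> f a \<cdot> (f a)\<^sup>-\<^sup>1 = f b \<cdot> (f b)\<^sup>-\<^sup>1"
  by (simp add: greenR_in_iff)

lemma le_S_iff: "le_S a b \<longleftrightarrow> (f a)\<^sup>-\<^sup>1 \<cdot> f a = (f a)\<^sup>-\<^sup>1 \<cdot> f a \<cdot> ((f b)\<^sup>-\<^sup>1 \<cdot> f b)"
  by (simp add: leL_in_iff_idem del: m_assoc)

lemma L_S_iff: "Lprime le_S a b \<longleftrightarrow> (f a)\<^sup>-\<^sup>1 \<cdot> f a = (f b)\<^sup>-\<^sup>1 \<cdot> f b"
  unfolding Lprime_def by (simp add: leL_in_antisym_iff)

lemma equivalence_R_S: "equivalence_rel R_S"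
  unfolding equivalence_rel_def R_S_iff by simp

lemma left_compatible_R_S: "left_compatible R_S"
  unfolding left_compatible_def
proof (intro allI impI)
  fix a b c
  assume "R_S a b"
  then have "f a \<cdot> (f a)\<^sup>-\<^sup>1 = f b \<cdot> (f b)\<^sup>-\<^sup>1" by (simp add: R_S_iff)
  from arg_cong[OF this, of "\<lambda>t. f c \<cdot> (t \<cdot> (f c)\<^sup>-\<^sup>1)"]
  show "R_S (c * a) (c * b)" by (simp add: greenR_in_iff f_mult inv_mult)
qed

lemma preorder_le_S: "preorder_rel le_S"
  unfolding preorder_rel_def leL_in_def by (metis f_closed m_assoc m_closed)

lemma M3_le_S: "M3 le_S"
  unfolding M3_def leL_in_def f_mult by auto

lemma f_mult1: "f (mult1 x a) = (case x of None \<Rightarrow> f a | Some u \<Rightarrow> f u \<cdot> f a)"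
  by (cases x) (simp_all add: mult1_def f_mult)

lemma mult1_cancel_of_leR:
  assumes le: "leR_in Q m (f b) (f a)" and eq: "mult1 x a = mult1 y a"
  shows "mult1 x b = mult1 y b"
proof -
  from le consider "b = a" | z where "z \<in> Q" "f b = f a \<cdot> z" unfolding leR_in_def by auto
  then have "f (mult1 x b) = f (mult1 y b)"
  proof cases
    case (2 z)
    then have "f (mult1 u b) = f (mult1 u a) \<cdot> z" for u by (cases u) (simp_all add: f_mult1)
    then show ?thesis using eq by metis
  qed (use eq in simp)
  then show ?thesis by simp
qed

lemma M4_R_S: "M4 R_S"
  unfolding M4_def Rstar_def greenR_in_def using mult1_cancel_of_leR by metis

lemma M5_R_S_le_S: "M5 R_S le_S"
  unfolding M5_def
proof (intro allI impI)
  fix \<alpha> \<beta> \<gamma> \<delta>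
  assume \<gamma>: "R_S \<gamma> (\<gamma> * \<alpha>)" "Lprime le_S (\<gamma> * \<alpha>) \<alpha>"
    and \<delta>: "R_S \<delta> (\<delta> * \<beta>)" "Lprime le_S (\<delta> * \<beta>) \<beta>"
  have "(f \<gamma>)\<^sup>-\<^sup>1 \<cdot> f \<gamma> = f \<alpha> \<cdot> (f \<alpha>)\<^sup>-\<^sup>1"
    by (rule inv_mult_eq_of_greenR_leL) (use \<gamma> in \<open>simp_all add: Lprime_def f_mult\<close>)
  moreover have "(f \<delta>)\<^sup>-\<^sup>1 \<cdot> f \<delta> = f \<beta> \<cdot> (f \<beta>)\<^sup>-\<^sup>1"
    by (rule inv_mult_eq_of_greenR_leL) (use \<delta> in \<open>simp_all add: Lprime_def f_mult\<close>)
  ultimately show "Lprime le_S \<gamma> \<delta> \<longleftrightarrow> R_S \<alpha> \<beta>" by (simp add: L_S_iff R_S_iff)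
qed

lemma M6_le_S: "M6 le_S"
  unfolding M6_def
proof (intro allI impI)
  fix \<alpha> \<beta> \<gamma>
  assume L: "Lprime le_S \<alpha> \<beta>" "Lprime le_S \<beta> (\<gamma> * \<alpha>)" and eq: "\<gamma> * \<alpha> = \<gamma> * \<beta>"
  have "le_S \<alpha> (\<gamma> * \<alpha>)" "le_S \<beta> (\<gamma> * \<beta>)"
    using L eq preorder_le_S unfolding Lprime_def preorder_rel_def by metis+
  then have "(f \<gamma>)\<^sup>-\<^sup>1 \<cdot> (f \<gamma> \<cdot> f \<alpha>) = f \<alpha>" "(f \<gamma>)\<^sup>-\<^sup>1 \<cdot> (f \<gamma> \<cdot> f \<beta>) = f \<beta>"
    by (simp_all add: inv_mult_cancel_of_leL f_mult)
  then show "\<alpha> = \<beta>" using eq by (metis f_eq_iff f_mult)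
qed

lemma M1_witness:
  "\<exists>\<gamma> \<delta>. R_S \<gamma> \<delta> \<and> R_S \<delta> (\<delta> * \<beta>) \<and> \<delta> * \<beta> = \<gamma> * \<alpha> \<and>
     (f (\<gamma> * \<alpha>))\<^sup>-\<^sup>1 \<cdot> f (\<gamma> * \<alpha>) = (f \<alpha>)\<^sup>-\<^sup>1 \<cdot> f \<alpha> \<cdot> ((f \<beta>)\<^sup>-\<^sup>1 \<cdot> f \<beta>)"
proof -
  obtain \<gamma> \<delta> where q: "f \<alpha> \<cdot> (f \<beta>)\<^sup>-\<^sup>1 = (f \<gamma>)\<^sup>-\<^sup>1 \<cdot> f \<delta>" and R: "R_S \<gamma> \<delta>"
    using straight_decomposition[of "f \<alpha> \<cdot> (f \<beta>)\<^sup>-\<^sup>1"] by auto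
  note quotient = straight_quotient_mult[OF f_closed f_closed f_closed f_closed
      R[unfolded R_S_iff] q[symmetric]]
  have "\<delta> * \<beta> = \<gamma> * \<alpha>" using quotient(1) by (metis f_eq_iff f_mult)
  moreover have "R_S \<delta> (\<delta> * \<beta>)"
    using arg_cong[OF quotient(3), of "\<lambda>t. t \<cdot> (f \<delta>)\<^sup>-\<^sup>1"] by (simp add: greenR_in_iff f_mult inv_mult)
  moreover have "(f (\<gamma> * \<alpha>))\<^sup>-\<^sup>1 \<cdot> f (\<gamma> * \<alpha>) = (f \<alpha>)\<^sup>-\<^sup>1 \<cdot> f \<alpha> \<cdot> ((f \<beta>)\<^sup>-\<^sup>1 \<cdot> f \<beta>)"
    using quotient(2) by (simp add: f_mult)
  ultimately show ?thesis using R by blast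
qed

lemma is_meet_le_S_of_idem:
  assumes c: "(f c)\<^sup>-\<^sup>1 \<cdot> f c = (f a)\<^sup>-\<^sup>1 \<cdot> f a \<cdot> ((f b)\<^sup>-\<^sup>1 \<cdot> f b)"
  shows "is_meet le_S a b c"
proof -
  define e where "e x = (f x)\<^sup>-\<^sup>1 \<cdot> f x" for x
  have e: "idem (e x)" "e x \<in> Q" for x by (simp_all add: e_def)
  have c': "e c = e a \<cdot> e b" and le: "le_S x y \<longleftrightarrow> e x = e x \<cdot> e y" for x y
    using c by (simp_all add: e_def le_S_iff del: m_assoc)
  have "e a \<cdot> e b = e a \<cdot> e b \<cdot> e a"
    using idem_commute[OF e(1)[of a] e(1)[of b]] e by (simp add: idem_def)
  moreover have "e a \<cdot> e b = e a \<cdot> e b \<cdot> e b" using e by (simp add: idem_def)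
  moreover have "e x = e x \<cdot> (e a \<cdot> e b)" if "e x = e x \<cdot> e a" "e x = e x \<cdot> e b" for x
    using that e by (metis m_assoc)
  ultimately show ?thesis unfolding is_meet_def le c' by blast
qed

lemma is_meet_le_S_iff:
  "is_meet le_S a b c \<longleftrightarrow> (f c)\<^sup>-\<^sup>1 \<cdot> f c = (f a)\<^sup>-\<^sup>1 \<cdot> f a \<cdot> ((f b)\<^sup>-\<^sup>1 \<cdot> f b)"
proof
  assume c: "is_meet le_S a b c"
  obtain \<gamma> where w: "(f (\<gamma> * a))\<^sup>-\<^sup>1 \<cdot> f (\<gamma> * a) = (f a)\<^sup>-\<^sup>1 \<cdot> f a \<cdot> ((f b)\<^sup>-\<^sup>1 \<cdot> f b)"
    using M1_witness by blast
  have "Lprime le_S c (\<gamma> * a)"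
    using c is_meet_le_S_of_idem[OF w] unfolding is_meet_def Lprime_def by blast
  then show "(f c)\<^sup>-\<^sup>1 \<cdot> f c = (f a)\<^sup>-\<^sup>1 \<cdot> f a \<cdot> ((f b)\<^sup>-\<^sup>1 \<cdot> f b)"
    using w by (simp only: L_S_iff)
qed (rule is_meet_le_S_of_idem)

lemma M1_R_S_le_S: "M1 R_S le_S"
  unfolding M1_def is_meet_le_S_iff using M1_witness by blast

lemma meet_semilattice_le_S: "meet_semilattice_classes le_S"
  unfolding meet_semilattice_classes_def is_meet_le_S_iff using M1_witness by blast

lemma M2_le_S: "M2 le_S"
  unfolding M2_def is_meet_le_S_iff
proof (intro allI impI)
  fix \<alpha> \<beta> \<gamma> \<delta>
  assume "(f \<gamma>)\<^sup>-\<^sup>1 \<cdot> f \<gamma> = (f \<alpha>)\<^sup>-\<^sup>1 \<cdot> f \<alpha> \<cdot> ((f \<beta>)\<^sup>-\<^sup>1 \<cdot> f \<beta>)"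
  from arg_cong[OF this, of "\<lambda>t. (f \<delta>)\<^sup>-\<^sup>1 \<cdot> (t \<cdot> f \<delta>)"]
  show "(f (\<gamma> * \<delta>))\<^sup>-\<^sup>1 \<cdot> f (\<gamma> * \<delta>) =
      (f (\<alpha> * \<delta>))\<^sup>-\<^sup>1 \<cdot> f (\<alpha> * \<delta>) \<cdot> ((f (\<beta> * \<delta>))\<^sup>-\<^sup>1 \<cdot> f (\<beta> * \<delta>))"
    using idem_mult_conj[of "(f \<beta>)\<^sup>-\<^sup>1 \<cdot> f \<beta>" "f \<delta>"] by (simp add: f_mult inv_mult)
qed

theorem necessity:
  assumes "\<forall>a b. R_S a b \<longleftrightarrow> R' a b" and "\<forall>a b. le_S a b \<longleftrightarrow> le_l a b"
  shows "equivalence_rel R' \<and> left_compatible R' \<and> preorder_rel le_l \<and>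
    meet_semilattice_classes le_l \<and> M1 R' le_l \<and> M2 le_l \<and> M3 le_l \<and> M4 R' \<and>
    M5 R' le_l \<and> M6 le_l"
proof -
  have "R' = (\<lambda>a b. R_S a b)" and "le_l = (\<lambda>a b. le_S a b)" using assms by auto
  then show ?thesis
    using equivalence_R_S left_compatible_R_S preorder_le_S meet_semilattice_le_S
      M1_R_S_le_S M2_le_S M3_le_S M4_R_S M5_R_S_le_S M6_le_S by simp
qed

end

section \<open>Sufficiency\<close>

lemma is_inverse_in_unique_of_idem_commute:
  assumes sg: "is_semigroup Q m"
    and comm: "\<And>e g. e \<in> Q \<Longrightarrow> g \<in> Q \<Longrightarrow> m e e = e \<Longrightarrow> m g g = g \<Longrightarrow> m e g = m g e"
    and a: "a \<in> Q" and ib: "is_inverse_in Q m a b" and ic: "is_inverse_in Q m a c"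
  shows "b = c"
proof -
  have cl: "\<And>x y. x \<in> Q \<Longrightarrow> y \<in> Q \<Longrightarrow> m x y \<in> Q"
    and as: "\<And>x y z. x \<in> Q \<Longrightarrow> y \<in> Q \<Longrightarrow> z \<in> Q \<Longrightarrow> m (m x y) z = m x (m y z)"
    using sg unfolding is_semigroup_def by blast+
  have bQ: "b \<in> Q" and b1: "m (m a b) a = a" and b2: "m (m b a) b = b"
    and cQ: "c \<in> Q" and c1: "m (m a c) a = a" and c2: "m (m c a) c = c"
    using ib ic by (auto simp: is_inverse_in_def)
  have ba: "m (m b a) (m b a) = m b a" using b1 a bQ by (metis as cl)
  have ca: "m (m c a) (m c a) = m c a" using c1 a cQ by (metis as cl)
  have ab: "m (m a b) (m a b) = m a b" using b1 a bQ by (metis as cl)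
  have ac: "m (m a c) (m a c) = m a c" using c1 a cQ by (metis as cl)
  have "b = m (m b (m (m a c) a)) b" using b2 c1 by simp
  also have "\<dots> = m (m (m b a) (m c a)) b" using a bQ cQ by (simp add: as cl)
  also have "\<dots> = m (m (m c a) (m b a)) b" using comm[OF cl[OF bQ a] cl[OF cQ a] ba ca] by simp
  also have "\<dots> = m c (m a b)" using a bQ cQ b2 by (simp add: as cl)
  finally have b: "b = m c (m a b)" .
  have "c = m c (m (m (m a b) a) c)" using c2 a cQ b1 by (simp add: as)
  also have "\<dots> = m c (m (m a b) (m a c))" using a bQ cQ by (simp add: as cl)
  also have "\<dots> = m c (m (m a c) (m a b))" using comm[OF cl[OF a bQ] cl[OF a cQ] ab ac] by simp
  also have "\<dots> = m (m (m c a) c) (m a b)" using a bQ cQ by (simp add: as cl)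
  also have "\<dots> = m c (m a b)" using c2 by simp
  finally show ?thesis using b by simp
qed

text \<open>The semilattice condition is not assumed: (M1) already provides all meets.\<close>

locale straight_quotient_conditions =
  fixes R :: "'a::semigroup_mult \<Rightarrow> 'a \<Rightarrow> bool" and le :: "'a \<Rightarrow> 'a \<Rightarrow> bool"
  assumes equivalence_R: "equivalence_rel R" and left_compatible_R: "left_compatible R"
    and preorder_le: "preorder_rel le"
    and M1: "M1 R le" and M2: "M2 le" and M3: "M3 le" and M4: "M4 R" and M5: "M5 R le"
    and M6: "M6 le"
begin

abbreviation L :: "'a \<Rightarrow> 'a \<Rightarrow> bool" where
  "L \<equiv> Lprime le"

lemma R_refl [simp]: "R a a"
  using equivalence_R unfolding equivalence_rel_def by blast

lemma R_sym: "R a b \<Longrightarrow> R b a"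
  using equivalence_R unfolding equivalence_rel_def by blast

lemma R_trans: "R a b \<Longrightarrow> R b c \<Longrightarrow> R a c"
  using equivalence_R unfolding equivalence_rel_def by blast

lemma R_mult_left: "R a b \<Longrightarrow> R (c * a) (c * b)"
  using left_compatible_R unfolding left_compatible_def by blast

lemma R_right_cancel: "R a b \<Longrightarrow> x * a = y * a \<Longrightarrow> x * b = y * b"
  using M4 unfolding M4_def Rstar_def mult1_def by (metis option.simps(5))

lemma le_refl [simp]: "le a a"
  using preorder_le unfolding preorder_rel_def by blast

lemma le_trans: "le a b \<Longrightarrow> le b c \<Longrightarrow> le a c"
  using preorder_le unfolding preorder_rel_def by blast

lemma le_mult_left: "le (a * b) b"
  using M3 unfolding M3_def by blast

lemma L_refl [simp]: "L a a"
  by (simp add: Lprime_def)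

lemma L_sym: "L a b \<Longrightarrow> L b a"
  by (simp add: Lprime_def)

lemma L_trans: "L a b \<Longrightarrow> L b c \<Longrightarrow> L a c"
  unfolding Lprime_def using le_trans by blast

lemma L_imp_le: "L a b \<Longrightarrow> le a b"
  by (simp add: Lprime_def)

lemma L_imp_ge: "L a b \<Longrightarrow> le b a"
  by (simp add: Lprime_def)

lemma L_left_cancel: "L (p * s) s \<Longrightarrow> L (p * t) t \<Longrightarrow> p * s = p * t \<Longrightarrow> s = t"
  using M6 unfolding M6_def by (metis L_sym L_trans)

lemma meet_witness:
  "\<exists>\<gamma> \<delta>. R \<gamma> \<delta> \<and> R \<delta> (\<delta> * \<beta>) \<and> \<delta> * \<beta> = \<gamma> * \<alpha> \<and> is_meet le \<alpha> \<beta> (\<gamma> * \<alpha>)"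
  using M1 unfolding M1_def by blast

lemma is_meet_mult_right: "is_meet le a b c \<Longrightarrow> is_meet le (a * d) (b * d) (c * d)"
  using M2 unfolding M2_def by blast

lemma is_meet_lower1: "is_meet le a b c \<Longrightarrow> le c a"
  by (simp add: is_meet_def)

lemma is_meet_lower2: "is_meet le a b c \<Longrightarrow> le c b"
  by (simp add: is_meet_def)

lemma is_meet_greatest: "is_meet le a b c \<Longrightarrow> le d a \<Longrightarrow> le d b \<Longrightarrow> le d c"
  by (simp add: is_meet_def)

lemma is_meet_commute: "is_meet le a b c \<Longrightarrow> is_meet le b a c"
  by (auto simp: is_meet_def)

lemma is_meet_unique: "is_meet le a b c \<Longrightarrow> is_meet le a b c' \<Longrightarrow> L c c'"
  by (simp add: is_meet_def Lprime_def)

lemma is_meet_of_le: "le a b \<Longrightarrow> is_meet le a b a"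
  by (simp add: is_meet_def)

lemma is_meet_L_of_le: "is_meet le a b c \<Longrightarrow> le a b \<Longrightarrow> L c a"
  unfolding is_meet_def Lprime_def by (meson le_refl)

lemma is_meet_L_cong:
  "is_meet le a b c \<Longrightarrow> L a a' \<Longrightarrow> L b b' \<Longrightarrow> L c c' \<Longrightarrow> is_meet le a' b' c'"
  unfolding is_meet_def Lprime_def by (meson le_trans)

lemma le_mult_right: "le a b \<Longrightarrow> le (a * s) (b * s)"
  using is_meet_mult_right[OF is_meet_of_le] is_meet_lower2 by blast

lemma L_mult_right: "L a b \<Longrightarrow> L (a * s) (b * s)"
  unfolding Lprime_def using le_mult_right by blast

text \<open>\<open>denom p g\<close> says that \<open>p = g\<^sup>-\<^sup>1 (g p)\<close> is a straight decomposition of \<open>p\<close> in the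
  quotient: \<open>g\<^sup>-\<^sup>1 g = p p\<^sup>-\<^sup>1\<close>.\<close>

definition denom :: "'a \<Rightarrow> 'a \<Rightarrow> bool" where
  "denom p g \<longleftrightarrow> R g (g * p) \<and> L (g * p) p"

lemma denom_exists: "\<exists>g. denom p g"
proof -
  obtain \<gamma> \<delta> where "R \<gamma> \<delta>" "R \<delta> (\<delta> * p)" "\<delta> * p = \<gamma> * p" "is_meet le p p (\<gamma> * p)"
    using meet_witness[of p p] by blast
  then have "R \<gamma> (\<gamma> * p)" "L (\<gamma> * p) p" using R_trans is_meet_L_of_le[of p p] by auto
  then show ?thesis unfolding denom_def by blast
qed

lemma denom_L_iff: "denom p g \<Longrightarrow> denom q h \<Longrightarrow> L g h \<longleftrightarrow> R p q"
  using M5 unfolding denom_def M5_def by blast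

lemma denom_le_imp_L: "denom p g \<Longrightarrow> le g u \<Longrightarrow> L (u * p) p"
proof -
  assume g: "denom p g" and u: "le g u"
  have "le (g * p) (u * p)" using le_mult_right[OF u] .
  moreover have "le p (g * p)" using g unfolding denom_def Lprime_def by blast
  ultimately show ?thesis unfolding Lprime_def using le_mult_left le_trans by blast
qed

lemma L_imp_denom_le: "denom p g \<Longrightarrow> L (u * p) p \<Longrightarrow> le g u"
proof -
  assume g: "denom p g" and u: "L (u * p) p"
  obtain x y where h: "R y (y * g)" "y * g = x * u" "is_meet le u g (x * u)"
    using meet_witness[where \<alpha>=u and \<beta>=g] by blast
  have "is_meet le (u * p) (g * p) (x * u * p)" using is_meet_mult_right[OF h(3)] .
  moreover have "L (u * p) (g * p)" using u g unfolding denom_def by (meson L_sym L_trans)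
  ultimately have "L (x * u * p) (u * p)" using is_meet_L_of_le L_imp_le by blast
  then have "L (y * (g * p)) p" using h(2) u by (metis L_trans mult.assoc)
  moreover have "R y (y * (g * p))"
    using g h(1) R_mult_left R_trans unfolding denom_def by blast
  ultimately have y: "denom (g * p) y"
    using g unfolding denom_def by (meson L_sym L_trans)
  obtain k where k: "denom g k" using denom_exists by blast
  have "R g (g * p)" using g unfolding denom_def by blast
  then have "le k y" using denom_L_iff[OF k y] L_imp_le by blast
  then have "le g (x * u)" using denom_le_imp_L[OF k] h(2) L_imp_ge by metis
  then show "le g u" using le_mult_left le_trans by blast
qed

lemma denom_le_iff: "denom p g \<Longrightarrow> le g u \<longleftrightarrow> L (u * p) p"
  using denom_le_imp_L L_imp_denom_le by blast

lemma L_fixer_R_transfer: "R p q \<Longrightarrow> L (u * p) p \<Longrightarrow> L (u * q) q"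
proof -
  assume r: "R p q" and u: "L (u * p) p"
  obtain g h where g: "denom p g" and h: "denom q h" using denom_exists by blast
  have "le h g" using denom_L_iff[OF g h] r L_imp_ge by blast
  moreover have "le g u" using denom_le_iff[OF g] u by blast
  ultimately show ?thesis using denom_le_iff[OF h] le_trans by blast
qed

lemma le_mult_R_transfer: "R a b \<Longrightarrow> le (x * b) (y * b) \<Longrightarrow> le (x * a) (y * a)"
proof -
  assume r: "R a b" and l: "le (x * b) (y * b)"
  obtain \<gamma> \<delta> where h: "\<delta> * (y * b) = \<gamma> * (x * b)" "is_meet le (x * b) (y * b) (\<gamma> * (x * b))"
    using meet_witness[where \<alpha>="x * b" and \<beta>="y * b"] by blast
  have "(\<gamma> * x) * b = (\<delta> * y) * b" using h(1) by (simp add: mult.assoc)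
  then have e: "(\<gamma> * x) * a = (\<delta> * y) * a" using R_right_cancel R_sym[OF r] by blast
  have "L (\<gamma> * (x * b)) (x * b)" using is_meet_L_of_le[OF h(2) l] .
  then have "L (\<gamma> * (x * a)) (x * a)" using L_fixer_R_transfer R_mult_left R_sym[OF r] by blast
  moreover have "le (\<delta> * (y * a)) (y * a)" by (rule le_mult_left)
  ultimately show ?thesis using e unfolding Lprime_def by (metis le_trans mult.assoc)
qed

lemma L_mult_R_transfer: "R a b \<Longrightarrow> L (x * b) (y * b) \<Longrightarrow> L (x * a) (y * a)"
  unfolding Lprime_def using le_mult_R_transfer by blast

definition pairs :: "('a \<times> 'a) set" where
  "pairs = {(a, b). R a b}"

lemma mem_pairs [simp]: "(a, b) \<in> pairs \<longleftrightarrow> R a b"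
  by (simp add: pairs_def)

text \<open>A pair \<open>(a, b) \<in> pairs\<close> stands for the left I-quotient \<open>a\<^sup>-\<^sup>1 b\<close>.\<close>

definition pair_equiv :: "'a \<times> 'a \<Rightarrow> 'a \<times> 'a \<Rightarrow> bool" (infix "\<approx>" 50) where
  "p \<approx> q \<longleftrightarrow> L (fst p) (fst q) \<and> (\<forall>x y. x * fst p = y * fst q \<longrightarrow> x * snd p = y * snd q)"

lemma pair_equiv_L: "(a, b) \<approx> (c, d) \<Longrightarrow> L a c"
  by (simp add: pair_equiv_def)

lemma pair_equiv_mult: "(a, b) \<approx> (c, d) \<Longrightarrow> x * a = y * c \<Longrightarrow> x * b = y * d"
  by (simp add: pair_equiv_def)

lemma pair_equiv_diag: "(u, u) \<approx> (v, v) \<longleftrightarrow> L u v"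
  by (simp add: pair_equiv_def)

lemma pair_equiv_refl: "p \<in> pairs \<Longrightarrow> p \<approx> p"
  by (cases p) (simp add: pair_equiv_def, blast intro: R_right_cancel)

lemma pair_equiv_sym: "p \<approx> q \<Longrightarrow> q \<approx> p"
  unfolding pair_equiv_def by (metis L_sym)

lemma pair_equiv_trans_Pair:
  assumes p: "R a b" "R e f" and h1: "(a, b) \<approx> (c, d)" and h2: "(c, d) \<approx> (e, f)"
  shows "(a, b) \<approx> (e, f)"
proof -
  have lac: "L a c" and lce: "L c e" using h1 h2 by (simp_all add: pair_equiv_def)
  have "x * b = y * f" if xy: "x * a = y * e" for x y
  proof -
    obtain \<gamma> \<delta> where h: "\<delta> * c = \<gamma> * (x * a)" "is_meet le (x * a) c (\<gamma> * (x * a))"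
      using meet_witness[where \<alpha>="x * a" and \<beta>=c] by blast
    have "le (x * a) c" using le_mult_left lac L_imp_le le_trans by blast
    then have l1: "L (\<gamma> * (x * a)) (x * a)" using is_meet_L_of_le[OF h(2)] by blast
    have "(\<gamma> * x) * a = \<delta> * c" using h(1) by (simp add: mult.assoc)
    then have e1: "(\<gamma> * x) * b = \<delta> * d" using pair_equiv_mult[OF h1] by blast
    have "\<delta> * c = (\<gamma> * y) * e" using h(1) xy by (simp add: mult.assoc)
    then have e2: "\<delta> * d = (\<gamma> * y) * f" using pair_equiv_mult[OF h2] by blast
    have l2: "L (\<gamma> * (x * b)) (x * b)" using L_fixer_R_transfer[OF R_mult_left[OF p(1)] l1] .
    have "L (\<gamma> * (y * e)) (y * e)" using l1 xy by simp
    then have l3: "L (\<gamma> * (y * f)) (y * f)" using L_fixer_R_transfer[OF R_mult_left[OF p(2)]] by blast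
    have "\<gamma> * (x * b) = \<gamma> * (y * f)" using e1 e2 by (simp add: mult.assoc)
    then show ?thesis using L_left_cancel[OF l2 l3] by blast
  qed
  then show ?thesis using lac lce L_trans by (simp add: pair_equiv_def)
qed

lemma pair_equiv_trans: "p \<in> pairs \<Longrightarrow> r \<in> pairs \<Longrightarrow> p \<approx> q \<Longrightarrow> q \<approx> r \<Longrightarrow> p \<approx> r"
  using pair_equiv_trans_Pair by (metis mem_pairs prod.collapse)

lemma pair_equiv_swap:
  assumes p: "R a b" "R c d" and h: "(a, b) \<approx> (c, d)"
  shows "(b, a) \<approx> (d, c)"
proof -
  have lac: "L a c" using h by (simp add: pair_equiv_def)
  obtain \<gamma> \<delta> where w: "\<delta> * c = \<gamma> * a" "is_meet le a c (\<gamma> * a)"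
    using meet_witness[where \<alpha>=a and \<beta>=c] by blast
  have la: "L (\<gamma> * a) a" using is_meet_L_of_le[OF w(2) L_imp_le[OF lac]] .
  have wb: "\<gamma> * b = \<delta> * d" using pair_equiv_mult[OF h] w(1) by metis
  have lb: "L (\<gamma> * b) b" using L_fixer_R_transfer[OF p(1) la] .
  have "L (\<delta> * c) c" using la lac w(1) by (metis L_trans)
  then have ld: "L (\<delta> * d) d" using L_fixer_R_transfer[OF p(2)] by blast
  have lbd: "L b d" using lb ld wb by (metis L_sym L_trans)
  have "x * a = y * c" if xy: "x * b = y * d" for x y
  proof -
    obtain u v where h2: "v * (\<gamma> * b) = u * (x * b)" "is_meet le (x * b) (\<gamma> * b) (u * (x * b))"
      using meet_witness[where \<alpha>="x * b" and \<beta>="\<gamma> * b"] by blast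
    have "le (x * b) (\<gamma> * b)" using le_mult_left lb L_imp_ge le_trans by blast
    then have l1: "L (u * (x * b)) (x * b)" using is_meet_L_of_le[OF h2(2)] by blast
    have "(u * x) * b = (v * \<gamma>) * b" using h2(1) by (simp add: mult.assoc)
    then have e1: "(u * x) * a = (v * \<gamma>) * a" using R_right_cancel R_sym[OF p(1)] by blast
    have "(u * y) * d = (v * \<delta>) * d" using h2(1) xy wb by (simp add: mult.assoc)
    then have e2: "(u * y) * c = (v * \<delta>) * c" using R_right_cancel R_sym[OF p(2)] by blast
    have eq: "u * (x * a) = u * (y * c)" using e1 e2 w(1) by (simp add: mult.assoc)
    have l2: "L (u * (x * a)) (x * a)"
      using L_fixer_R_transfer[OF R_mult_left[OF R_sym[OF p(1)]] l1] .
    have "L (u * (y * d)) (y * d)" using l1 xy by simp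
    then have l3: "L (u * (y * c)) (y * c)"
      using L_fixer_R_transfer[OF R_mult_left[OF R_sym[OF p(2)]]] by blast
    show ?thesis using L_left_cancel[OF l2 l3 eq] .
  qed
  then show ?thesis using lbd by (simp add: pair_equiv_def)
qed

lemma pair_equiv_L_transfer:
  assumes p: "R a b" "R a' b'" and h: "(a, b) \<approx> (a', b')" and l: "L (x * b) (y * b')"
  shows "L (x * a) (y * a')"
proof -
  have hs: "(b, a) \<approx> (b', a')" using pair_equiv_swap[OF p h] .
  obtain u v where w: "v * (y * b') = u * (x * b)" "is_meet le (x * b) (y * b') (u * (x * b))"
    using meet_witness[where \<alpha>="x * b" and \<beta>="y * b'"] by blast
  have l1: "L (u * (x * b)) (x * b)" using is_meet_L_of_le[OF w(2) L_imp_le[OF l]] .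
  have "(u * x) * b = (v * y) * b'" using w(1) by (simp add: mult.assoc)
  then have e: "(u * x) * a = (v * y) * a'" using pair_equiv_mult[OF hs] by blast
  have l2: "L (u * (x * a)) (x * a)"
    using L_fixer_R_transfer[OF R_mult_left[OF R_sym[OF p(1)]] l1] .
  have "L (v * (y * b')) (y * b')" using l1 l w(1) by (metis L_trans)
  then have l3: "L (v * (y * a')) (y * a')"
    using L_fixer_R_transfer[OF R_mult_left[OF R_sym[OF p(2)]]] by blast
  show ?thesis using l2 l3 e by (metis L_sym L_trans mult.assoc)
qed

definition meet_factors :: "'a \<Rightarrow> 'a \<Rightarrow> 'a \<times> 'a" where
  "meet_factors b c = (SOME (\<gamma>, \<delta>). \<delta> * c = \<gamma> * b \<and> is_meet le b c (\<gamma> * b))"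

text \<open>If \<open>\<gamma> b = \<delta> c\<close> realises the meet of the \<open>L'\<close>-classes of \<open>b\<close> and \<open>c\<close>, then
  \<open>b c\<^sup>-\<^sup>1 = \<gamma>\<^sup>-\<^sup>1 \<delta>\<close> in the quotient, so \<open>(a\<^sup>-\<^sup>1 b) (c\<^sup>-\<^sup>1 d) = (\<gamma> a)\<^sup>-\<^sup>1 (\<delta> d)\<close>.\<close>

definition pair_mult :: "'a \<times> 'a \<Rightarrow> 'a \<times> 'a \<Rightarrow> 'a \<times> 'a" (infixl "\<odot>" 70) where
  "p \<odot> q = (case meet_factors (snd p) (fst q) of (\<gamma>, \<delta>) \<Rightarrow> (\<gamma> * fst p, \<delta> * snd q))"

lemma pair_mult_Pair:
  "\<exists>\<gamma> \<delta>. (a, b) \<odot> (c, d) = (\<gamma> * a, \<delta> * d) \<and> \<delta> * c = \<gamma> * b \<and> is_meet le b c (\<gamma> * b)"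
proof -
  let ?P = "\<lambda>(\<gamma>, \<delta>). \<delta> * c = \<gamma> * b \<and> is_meet le b c (\<gamma> * b)"
  obtain \<gamma> \<delta> where "?P (\<gamma>, \<delta>)" using meet_witness[where \<alpha>=b and \<beta>=c] by auto
  then have "?P (meet_factors b c)" unfolding meet_factors_def by (rule someI)
  then show ?thesis unfolding pair_mult_def by (auto split: prod.splits)
qed

lemma pair_mult_closed: "p \<in> pairs \<Longrightarrow> q \<in> pairs \<Longrightarrow> p \<odot> q \<in> pairs"
proof (cases p, cases q)
  fix a b c d assume pq: "p \<in> pairs" "q \<in> pairs" and [simp]: "p = (a, b)" "q = (c, d)"
  obtain \<gamma> \<delta> where h: "(a, b) \<odot> (c, d) = (\<gamma> * a, \<delta> * d)" "\<delta> * c = \<gamma> * b"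
    using pair_mult_Pair by blast
  have "R (\<gamma> * a) (\<gamma> * b)" "R (\<delta> * c) (\<delta> * d)" using pq by (simp_all add: R_mult_left)
  then show ?thesis using h R_trans by simp
qed

lemma pair_mult_cong_Pair:
  assumes p: "R a b" "R c d" "R a' b'" "R c' d'"
    and e1: "(a, b) \<approx> (a', b')" and e2: "(c, d) \<approx> (c', d')"
  shows "(a, b) \<odot> (c, d) \<approx> (a', b') \<odot> (c', d')"
proof -
  obtain \<gamma> \<delta> where h: "(a, b) \<odot> (c, d) = (\<gamma> * a, \<delta> * d)" "\<delta> * c = \<gamma> * b"
      "is_meet le b c (\<gamma> * b)"
    using pair_mult_Pair by blast
  obtain \<gamma>' \<delta>' where h': "(a', b') \<odot> (c', d') = (\<gamma>' * a', \<delta>' * d')" "\<delta>' * c' = \<gamma>' * b'"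
      "is_meet le b' c' (\<gamma>' * b')"
    using pair_mult_Pair by blast
  have "is_meet le b' c' (\<gamma> * b)"
    using is_meet_L_cong[OF h(3) pair_equiv_L[OF pair_equiv_swap[OF p(1,3) e1]]
        pair_equiv_L[OF e2] L_refl] .
  then have "L (\<gamma> * b) (\<gamma>' * b')" using is_meet_unique h'(3) by blast
  then have l: "L (\<gamma> * a) (\<gamma>' * a')" using pair_equiv_L_transfer[OF p(1,3) e1] by blast
  have "s * (\<delta> * d) = t * (\<delta>' * d')" if st: "s * (\<gamma> * a) = t * (\<gamma>' * a')" for s t
  proof -
    have "(s * \<gamma>) * a = (t * \<gamma>') * a'" using st by (simp add: mult.assoc)
    then have "(s * \<gamma>) * b = (t * \<gamma>') * b'" using pair_equiv_mult[OF e1] by blast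
    then have "(s * \<delta>) * c = (t * \<delta>') * c'" using h(2) h'(2) by (simp add: mult.assoc)
    then have "(s * \<delta>) * d = (t * \<delta>') * d'" using pair_equiv_mult[OF e2] by blast
    then show ?thesis by (simp add: mult.assoc)
  qed
  then show ?thesis using h(1) h'(1) l by (simp add: pair_equiv_def)
qed

lemma pair_mult_cong:
  "p \<in> pairs \<Longrightarrow> q \<in> pairs \<Longrightarrow> p' \<in> pairs \<Longrightarrow> q' \<in> pairs \<Longrightarrow> p \<approx> p' \<Longrightarrow> q \<approx> q' \<Longrightarrow>
    p \<odot> q \<approx> p' \<odot> q'"
  using pair_mult_cong_Pair by (metis mem_pairs prod.collapse)

text \<open>The meet computed first in \<open>((a, b) \<odot> (c, d)) \<odot> (e, f)\<close> is realised by the factors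
  computed in \<open>(a, b) \<odot> ((c, d) \<odot> (e, f))\<close>.\<close>

lemma is_meet_pair_mult_assoc:
  assumes r: "R c d" and h1: "\<delta> * c = \<gamma> * b" "is_meet le b c (\<gamma> * b)"
    and h3: "is_meet le d e (\<mu> * d)"
    and h4: "\<delta>' * (\<mu> * c) = \<gamma>' * b" "is_meet le b (\<mu> * c) (\<gamma>' * b)"
  shows "is_meet le (\<delta> * d) e (\<delta>' * \<mu> * d)"
proof -
  have dc: "R d c" using R_sym[OF r] .
  have "le (\<gamma>' * b) c" using is_meet_lower2[OF h4(2)] le_mult_left le_trans by blast
  then have "le (\<gamma>' * b) (\<gamma> * b)" using is_meet_greatest[OF h1(2)] is_meet_lower1[OF h4(2)] by blast
  then have "le ((\<delta>' * \<mu>) * c) (\<delta> * c)" using h1(1) h4(1) by (simp add: mult.assoc)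
  then have A1: "le ((\<delta>' * \<mu>) * d) (\<delta> * d)" using le_mult_R_transfer[OF dc] by blast
  have "le (\<delta>' * (\<mu> * d)) (\<mu> * d)" by (rule le_mult_left)
  then have A2: "le ((\<delta>' * \<mu>) * d) e" using is_meet_lower2[OF h3] le_trans by (simp add: mult.assoc)
  have A3: "le z ((\<delta>' * \<mu>) * d)" if z1: "le z (\<delta> * d)" and z2: "le z e" for z
  proof -
    have zd: "le z d" using z1 le_mult_left le_trans by blast
    obtain \<gamma>0 \<delta>0 where w: "\<delta>0 * d = \<gamma>0 * z" "is_meet le z d (\<gamma>0 * z)"
      using meet_witness[where \<alpha>=z and \<beta>=d] by blast
    have lz: "L (\<delta>0 * d) z" using is_meet_L_of_le[OF w(2) zd] w(1) by simp
    have u1: "le (\<delta>0 * d) (\<delta> * d)" using lz z1 L_imp_le le_trans by blast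
    have u2: "le (\<delta>0 * d) e" using lz z2 L_imp_le le_trans by blast
    have u3: "le (\<delta>0 * d) (\<mu> * d)"
      using is_meet_greatest[OF h3 _ u2] u1 le_mult_left le_trans by blast
    have "le (\<delta> * c) b" using h1(1) le_mult_left by simp
    then have "le (\<delta>0 * c) b" using le_mult_R_transfer[OF r u1] le_trans by blast
    then have "le (\<delta>0 * c) (\<gamma>' * b)"
      using is_meet_greatest[OF h4(2)] le_mult_R_transfer[OF r u3] by blast
    then have "le (\<delta>0 * c) ((\<delta>' * \<mu>) * c)" using h4(1) by (simp add: mult.assoc)
    then have "le (\<delta>0 * d) ((\<delta>' * \<mu>) * d)" using le_mult_R_transfer[OF dc] by blast
    then show ?thesis using lz L_imp_ge le_trans by blast
  qed
  show ?thesis unfolding is_meet_def using A1 A2 A3 by blast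
qed

lemma pair_mult_assoc_Pair:
  assumes r: "R a b" "R c d" "R e f"
  shows "(a, b) \<odot> (c, d) \<odot> (e, f) \<approx> (a, b) \<odot> ((c, d) \<odot> (e, f))"
proof -
  obtain \<gamma> \<delta> where h1: "(a, b) \<odot> (c, d) = (\<gamma> * a, \<delta> * d)" "\<delta> * c = \<gamma> * b"
      "is_meet le b c (\<gamma> * b)"
    using pair_mult_Pair by blast
  obtain \<gamma>' \<delta>' where h2: "(\<gamma> * a, \<delta> * d) \<odot> (e, f) = (\<gamma>' * (\<gamma> * a), \<delta>' * f)"
      "\<delta>' * e = \<gamma>' * (\<delta> * d)" "is_meet le (\<delta> * d) e (\<gamma>' * (\<delta> * d))"
    using pair_mult_Pair by blast
  obtain \<mu> \<nu> where h3: "(c, d) \<odot> (e, f) = (\<mu> * c, \<nu> * f)" "\<nu> * e = \<mu> * d"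
      "is_meet le d e (\<mu> * d)"
    using pair_mult_Pair by blast
  obtain \<gamma>'' \<delta>'' where h4: "(a, b) \<odot> (\<mu> * c, \<nu> * f) = (\<gamma>'' * a, \<delta>'' * (\<nu> * f))"
      "\<delta>'' * (\<mu> * c) = \<gamma>'' * b" "is_meet le b (\<mu> * c) (\<gamma>'' * b)"
    using pair_mult_Pair by blast
  have "is_meet le (\<delta> * d) e (\<delta>'' * \<mu> * d)"
    using is_meet_pair_mult_assoc[OF r(2) h1(2,3) h3(3) h4(2,3)] .
  then have "L ((\<gamma>' * \<delta>) * d) ((\<delta>'' * \<mu>) * d)"
    using is_meet_unique h2(3) by (simp add: mult.assoc)
  then have "L ((\<gamma>' * \<delta>) * c) ((\<delta>'' * \<mu>) * c)" using L_mult_R_transfer[OF r(2)] by blast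
  then have "L ((\<gamma>' * \<gamma>) * b) (\<gamma>'' * b)" using h1(2) h4(2) by (simp add: mult.assoc)
  then have "L ((\<gamma>' * \<gamma>) * a) (\<gamma>'' * a)" using L_mult_R_transfer[OF r(1)] by blast
  then have l: "L (\<gamma>' * (\<gamma> * a)) (\<gamma>'' * a)" by (simp add: mult.assoc)
  have "s * (\<delta>' * f) = t * (\<delta>'' * (\<nu> * f))" if st: "s * (\<gamma>' * (\<gamma> * a)) = t * (\<gamma>'' * a)" for s t
  proof -
    have "(s * \<gamma>' * \<gamma>) * a = (t * \<gamma>'') * a" using st by (simp add: mult.assoc)
    then have "(s * \<gamma>' * \<gamma>) * b = (t * \<gamma>'') * b" using R_right_cancel[OF r(1)] by blast
    then have "(s * \<gamma>' * \<delta>) * c = (t * \<delta>'' * \<mu>) * c" using h1(2) h4(2) by (simp add: mult.assoc)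
    then have "(s * \<gamma>' * \<delta>) * d = (t * \<delta>'' * \<mu>) * d" using R_right_cancel[OF r(2)] by blast
    then have "(s * \<delta>') * e = (t * \<delta>'' * \<nu>) * e" using h2(2) h3(2) by (simp add: mult.assoc)
    then have "(s * \<delta>') * f = (t * \<delta>'' * \<nu>) * f" using R_right_cancel[OF r(3)] by blast
    then show ?thesis by (simp add: mult.assoc)
  qed
  then show ?thesis using h1(1) h2(1) h3(1) h4(1) l by (simp add: pair_equiv_def)
qed

lemma pair_mult_assoc:
  "p \<in> pairs \<Longrightarrow> q \<in> pairs \<Longrightarrow> r \<in> pairs \<Longrightarrow> p \<odot> q \<odot> r \<approx> p \<odot> (q \<odot> r)"
  using pair_mult_assoc_Pair by (metis mem_pairs prod.collapse)

lemma pair_mult_diag: "\<exists>w. (a, a) \<odot> (c, c) = (w, w) \<and> is_meet le a c w"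
  using pair_mult_Pair[of a a c c] by auto

lemma pair_mult_idem_imp_diag:
  assumes r: "R a b" and h: "(a, b) \<odot> (a, b) \<approx> (a, b)"
  shows "a = b"
proof -
  obtain \<gamma> \<delta> where h1: "(a, b) \<odot> (a, b) = (\<gamma> * a, \<delta> * b)" "\<delta> * a = \<gamma> * b"
    using pair_mult_Pair by blast
  have e: "(\<gamma> * a, \<delta> * b) \<approx> (a, b)" using h h1(1) by simp
  have sb: "s * (\<delta> * b) = s * (\<delta> * a)" for s
  proof -
    have "s * (\<delta> * b) = (s * \<gamma>) * b" using pair_equiv_mult[OF e, of s "s * \<gamma>"] by (simp add: mult.assoc)
    then show ?thesis using h1(2) by (simp add: mult.assoc)
  qed
  have lb: "L (\<gamma> * b) b" using L_fixer_R_transfer[OF r pair_equiv_L[OF e]] .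
  obtain g where "denom (\<delta> * a) g" using denom_exists by blast
  then have l1: "L (g * (\<delta> * a)) (\<delta> * a)" unfolding denom_def by blast
  have l2: "L (\<delta> * a) b" using lb h1(2) by simp
  have "le b (g * (\<delta> * b))" using l1 l2 sb[of g] by (metis L_imp_ge L_trans)
  then have l3: "L (\<delta> * b) b" using le_mult_left le_trans unfolding Lprime_def by blast
  have l4: "L (g * (\<delta> * b)) (\<delta> * b)" using l1 l2 l3 sb[of g] by (metis L_sym L_trans)
  have "\<delta> * b = \<delta> * a" using L_left_cancel[OF l4 l1 sb] .
  moreover have "L (\<delta> * a) a" using L_fixer_R_transfer[OF R_sym[OF r] l3] .
  ultimately show "a = b" using L_left_cancel l3 by metis
qed

lemma pair_mult_swap: "R a b \<Longrightarrow> (a, b) \<odot> (b, a) \<approx> (a, a)"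
proof -
  assume r: "R a b"
  obtain \<gamma> \<delta> where h: "(a, b) \<odot> (b, a) = (\<gamma> * a, \<delta> * a)" "\<delta> * b = \<gamma> * b"
      "is_meet le b b (\<gamma> * b)"
    using pair_mult_Pair by blast
  have "L (\<gamma> * b) b" using is_meet_L_of_le[OF h(3)] by simp
  then have l: "L (\<gamma> * a) a" using L_fixer_R_transfer[OF R_sym[OF r]] by blast
  have "s * (\<delta> * a) = t * a" if st: "s * (\<gamma> * a) = t * a" for s t
  proof -
    have "(s * \<gamma>) * a = t * a" using st by (simp add: mult.assoc)
    then have "(s * \<gamma>) * b = t * b" using R_right_cancel[OF r] by blast
    then have "(s * \<delta>) * b = t * b" using h(2) by (simp add: mult.assoc)
    then have "(s * \<delta>) * a = t * a" using R_right_cancel[OF R_sym[OF r]] by blast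
    then show ?thesis by (simp add: mult.assoc)
  qed
  then show ?thesis using h(1) l by (simp add: pair_equiv_def)
qed

lemma pair_mult_diag_left: "R a b \<Longrightarrow> (a, a) \<odot> (a, b) \<approx> (a, b)"
proof -
  assume r: "R a b"
  obtain \<gamma> \<delta> where h: "(a, a) \<odot> (a, b) = (\<gamma> * a, \<delta> * b)" "\<delta> * a = \<gamma> * a"
      "is_meet le a a (\<gamma> * a)"
    using pair_mult_Pair by blast
  have l: "L (\<gamma> * a) a" using is_meet_L_of_le[OF h(3)] by simp
  have "s * (\<delta> * b) = t * b" if st: "s * (\<gamma> * a) = t * a" for s t
  proof -
    have "(s * \<delta>) * a = t * a" using st h(2) by (simp add: mult.assoc)
    then have "(s * \<delta>) * b = t * b" using R_right_cancel[OF r] by blast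
    then show ?thesis by (simp add: mult.assoc)
  qed
  then show ?thesis using h(1) l by (simp add: pair_equiv_def)
qed

lemma pair_mult_denom_decomposition:
  "R a b \<Longrightarrow> denom a g \<Longrightarrow> denom b h \<Longrightarrow> (g * a, g) \<odot> (h, h * b) \<approx> (a, b)"
proof -
  assume r: "R a b" and g: "denom a g" and hh: "denom b h"
  obtain \<gamma> \<delta> where w: "(g * a, g) \<odot> (h, h * b) = (\<gamma> * (g * a), \<delta> * (h * b))"
      "\<delta> * h = \<gamma> * g" "is_meet le g h (\<gamma> * g)"
    using pair_mult_Pair by blast
  have "L g h" using denom_L_iff[OF g hh] r by blast
  then have "L (\<gamma> * g) g" using is_meet_L_of_le[OF w(3)] L_imp_le by blast
  then have "L ((\<gamma> * g) * a) a" using denom_le_iff[OF g] L_imp_ge by blast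
  then have l: "L (\<gamma> * (g * a)) a" by (simp add: mult.assoc)
  have "s * (\<delta> * (h * b)) = t * b" if st: "s * (\<gamma> * (g * a)) = t * a" for s t
  proof -
    have "(s * \<gamma> * g) * a = t * a" using st by (simp add: mult.assoc)
    then have "(s * \<gamma> * g) * b = t * b" using R_right_cancel[OF r] by blast
    moreover have "s * (\<delta> * (h * b)) = (s * (\<delta> * h)) * b" by (simp add: mult.assoc)
    ultimately show ?thesis using w(2) by (simp add: mult.assoc)
  qed
  then show ?thesis using w(1) l by (simp add: pair_equiv_def)
qed

lemma pair_mult_denom_mult:
  assumes g: "denom s g" and h: "denom t h" and k: "denom (s * t) k"
  shows "(g, g * s) \<odot> (h, h * t) \<approx> (k, k * (s * t))"
proof -
  obtain \<gamma> \<delta> where w: "(g, g * s) \<odot> (h, h * t) = (\<gamma> * g, \<delta> * (h * t))"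
      "\<delta> * h = \<gamma> * (g * s)" "is_meet le (g * s) h (\<gamma> * (g * s))"
    using pair_mult_Pair by blast
  have e: "\<delta> * (h * t) = (\<gamma> * g) * (s * t)" using w(2) by (metis mult.assoc)
  have "R (\<gamma> * g) (\<gamma> * (g * s))" "R (\<delta> * h) (\<delta> * (h * t))"
    using g h R_mult_left unfolding denom_def by blast+
  then have r: "R (\<gamma> * g) ((\<gamma> * g) * (s * t))" using w(2) e R_trans by metis
  have "is_meet le (s * t) t (\<gamma> * (g * s) * t)"
  proof (rule is_meet_L_cong[OF is_meet_mult_right[OF w(3)]])
    show "L (g * s * t) (s * t)" using L_mult_right g unfolding denom_def by (metis mult.assoc)
    show "L (h * t) t" using h unfolding denom_def by blast
  qed simp
  then have "L ((\<gamma> * g) * (s * t)) (s * t)"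
    using is_meet_L_of_le le_mult_left by (metis mult.assoc)
  then have "denom (s * t) (\<gamma> * g)" using r unfolding denom_def by blast
  then have lk: "L (\<gamma> * g) k" using denom_L_iff[OF _ k] by simp
  have "x * (\<delta> * (h * t)) = y * (k * (s * t))" if "x * (\<gamma> * g) = y * k" for x y
    using that e by (metis mult.assoc)
  then show ?thesis using w(1) lk by (simp add: pair_equiv_def)
qed

text \<open>The semigroup has to live on \<open>('a \<times> 'a) set\<close>, so each \<open>\<approx>\<close>-class is represented by a
  chosen element.\<close>

definition canon :: "'a \<times> 'a \<Rightarrow> 'a \<times> 'a" where
  "canon p = (SOME q. q \<in> pairs \<and> q \<approx> p)"

definition quot_set :: "('a \<times> 'a) set" where
  "quot_set = canon ` pairs"

definition quot_mult :: "'a \<times> 'a \<Rightarrow> 'a \<times> 'a \<Rightarrow> 'a \<times> 'a" where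
  "quot_mult x y = canon (x \<odot> y)"

lemma canon: "p \<in> pairs \<Longrightarrow> canon p \<in> pairs \<and> canon p \<approx> p"
  unfolding canon_def by (rule someI[of _ p]) (simp add: pair_equiv_refl)

lemma canon_eq_iff: "p \<in> pairs \<Longrightarrow> q \<in> pairs \<Longrightarrow> canon p = canon q \<longleftrightarrow> p \<approx> q"
proof
  assume p: "p \<in> pairs" "q \<in> pairs" and e: "canon p = canon q"
  have "p \<approx> canon q" using canon[OF p(1)] pair_equiv_sym e by metis
  moreover have "canon q \<approx> q" using canon[OF p(2)] by blast
  ultimately show "p \<approx> q" using pair_equiv_trans p by blast
next
  assume p: "p \<in> pairs" "q \<in> pairs" and e: "p \<approx> q"
  have "r \<in> pairs \<and> r \<approx> p \<longleftrightarrow> r \<in> pairs \<and> r \<approx> q" for r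
    using e p pair_equiv_trans pair_equiv_sym by blast
  then show "canon p = canon q" unfolding canon_def by simp
qed

lemma quot_set_subset_pairs: "x \<in> quot_set \<Longrightarrow> x \<in> pairs"
  unfolding quot_set_def using canon by blast

lemma canon_in_quot_set: "p \<in> pairs \<Longrightarrow> canon p \<in> quot_set"
  unfolding quot_set_def by blast

lemma canon_of_quot_set: "x \<in> quot_set \<Longrightarrow> canon x = x"
proof -
  assume "x \<in> quot_set"
  then obtain p where p: "p \<in> pairs" and x: "x = canon p" unfolding quot_set_def by blast
  show "canon x = x" unfolding x using canon[OF p] p by (simp add: canon_eq_iff)
qed

lemma quot_mult_canon: "p \<in> pairs \<Longrightarrow> q \<in> pairs \<Longrightarrow> quot_mult (canon p) (canon q) = canon (p \<odot> q)"
proof -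
  assume p: "p \<in> pairs" "q \<in> pairs"
  then have "canon p \<odot> canon q \<approx> p \<odot> q" using canon pair_mult_cong by blast
  then show ?thesis unfolding quot_mult_def using p canon by (simp add: canon_eq_iff pair_mult_closed)
qed

lemma quot_mult_closed: "x \<in> quot_set \<Longrightarrow> y \<in> quot_set \<Longrightarrow> quot_mult x y \<in> quot_set"
  unfolding quot_mult_def using canon_in_quot_set pair_mult_closed quot_set_subset_pairs by blast

lemma semigroup_quot: "is_semigroup quot_set quot_mult"
  unfolding is_semigroup_def
proof (intro conjI ballI)
  fix x y z assume q: "x \<in> quot_set" "y \<in> quot_set" "z \<in> quot_set"
  then have p: "x \<in> pairs" "y \<in> pairs" "z \<in> pairs" and c: "canon x = x" "canon z = z"
    using quot_set_subset_pairs canon_of_quot_set by blast+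
  show "quot_mult x y \<in> quot_set" using quot_mult_closed q by blast
  have "quot_mult (quot_mult x y) z = canon (x \<odot> y \<odot> z)"
    using quot_mult_canon[of "x \<odot> y" z] p c pair_mult_closed by (simp add: quot_mult_def)
  also have "\<dots> = canon (x \<odot> (y \<odot> z))"
    using p by (simp add: canon_eq_iff pair_mult_closed pair_mult_assoc)
  also have "\<dots> = quot_mult x (quot_mult y z)"
    using quot_mult_canon[of x "y \<odot> z"] p c pair_mult_closed by (simp add: quot_mult_def)
  finally show "quot_mult (quot_mult x y) z = quot_mult x (quot_mult y z)" .
qed

lemma quot_idem_diag: "e \<in> quot_set \<Longrightarrow> quot_mult e e = e \<Longrightarrow> fst e = snd e"
proof -
  assume e: "e \<in> quot_set" "quot_mult e e = e"
  then have pe: "e \<in> pairs" using quot_set_subset_pairs by blast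
  have "canon (e \<odot> e) = canon e" using e canon_of_quot_set unfolding quot_mult_def by simp
  then have "e \<odot> e \<approx> e" using canon_eq_iff pair_mult_closed pe by blast
  then show ?thesis using pair_mult_idem_imp_diag pe by (metis mem_pairs prod.collapse)
qed

lemma quot_idem_commute:
  assumes q: "e \<in> quot_set" "g \<in> quot_set" and i: "quot_mult e e = e" "quot_mult g g = g"
  shows "quot_mult e g = quot_mult g e"
proof -
  obtain u where u: "e = (u, u)" using quot_idem_diag[OF q(1) i(1)] by (metis prod.collapse)
  obtain v where v: "g = (v, v)" using quot_idem_diag[OF q(2) i(2)] by (metis prod.collapse)
  obtain w where w: "(u, u) \<odot> (v, v) = (w, w)" "is_meet le u v w" using pair_mult_diag by blast
  obtain w' where w': "(v, v) \<odot> (u, u) = (w', w')" "is_meet le v u w'" using pair_mult_diag by blast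
  have "L w w'" using is_meet_unique[OF w(2) is_meet_commute[OF w'(2)]] .
  then have "canon (w, w) = canon (w', w')" by (simp add: canon_eq_iff pair_equiv_diag)
  then show ?thesis unfolding quot_mult_def using u v w w' by simp
qed

lemma quot_inverse: "x \<in> quot_set \<Longrightarrow> is_inverse_in quot_set quot_mult x (canon (snd x, fst x))"
proof -
  assume x: "x \<in> quot_set"
  obtain a b where ab: "x = (a, b)" by fastforce
  have r: "R a b" using quot_set_subset_pairs[OF x] ab by simp
  have c: "canon (a, b) = (a, b)" using canon_of_quot_set x ab by simp
  have eq: "quot_mult (canon p) (canon q) = canon r"
    if "p \<in> pairs" "q \<in> pairs" "r \<in> pairs" "p \<odot> q \<approx> r" for p q r
    using that by (simp add: quot_mult_canon canon_eq_iff pair_mult_closed)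
  have ba: "R b a" using R_sym[OF r] .
  have "quot_mult (canon (a, b)) (canon (b, a)) = canon (a, a)"
    by (rule eq) (simp_all add: r ba pair_mult_swap)
  moreover have "quot_mult (canon (a, a)) (canon (a, b)) = canon (a, b)"
    by (rule eq) (simp_all add: r pair_mult_diag_left)
  moreover have "quot_mult (canon (b, a)) (canon (a, b)) = canon (b, b)"
    by (rule eq) (simp_all add: r ba pair_mult_swap)
  moreover have "quot_mult (canon (b, b)) (canon (b, a)) = canon (b, a)"
    by (rule eq) (simp_all add: ba pair_mult_diag_left)
  ultimately show ?thesis unfolding is_inverse_in_def ab using c canon_in_quot_set ba by simp
qed

lemma inverse_semigroup_quot: "inverse_semigroup quot_set quot_mult"
  unfolding inverse_semigroup_def
  using semigroup_quot quot_inverse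
    is_inverse_in_unique_of_idem_commute[OF semigroup_quot quot_idem_commute] by blast

lemma inv_semigroup_quot: "inv_semigroup quot_set quot_mult"
  using inverse_semigroup_quot by (rule inv_semigroup.intro)

lemma inv_in_quot: "x \<in> quot_set \<Longrightarrow> inv_in quot_set quot_mult x = canon (snd x, fst x)"
  using inv_semigroup.inv_unique[OF inv_semigroup_quot] quot_inverse by metis

definition denom_of :: "'a \<Rightarrow> 'a" where
  "denom_of s = (SOME g. denom s g)"

definition embed :: "'a \<Rightarrow> 'a \<times> 'a" where
  "embed s = canon (denom_of s, denom_of s * s)"

lemma denom_denom_of: "denom s (denom_of s)"
  unfolding denom_of_def using denom_exists by (rule someI_ex)

lemma denom_of_pair: "(denom_of s, denom_of s * s) \<in> pairs"
  using denom_denom_of unfolding denom_def by simp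

lemma embed_in_quot_set: "embed s \<in> quot_set"
  unfolding embed_def using denom_of_pair by (rule canon_in_quot_set)

lemma embed_mult: "embed (s * t) = quot_mult (embed s) (embed t)"
proof -
  let ?p = "\<lambda>s. (denom_of s, denom_of s * s)"
  have "quot_mult (embed s) (embed t) = canon (?p s \<odot> ?p t)"
    unfolding embed_def by (rule quot_mult_canon[OF denom_of_pair denom_of_pair])
  also have "\<dots> = canon (?p (s * t))"
    using pair_mult_denom_mult[OF denom_denom_of denom_denom_of denom_denom_of]
      pair_mult_closed[OF denom_of_pair denom_of_pair] denom_of_pair canon_eq_iff by blast
  finally show ?thesis unfolding embed_def by simp
qed

lemma inj_embed: "inj embed"
proof (rule injI)
  fix s t assume e: "embed s = embed t"
  define g h where "g = denom_of s" and "h = denom_of t"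
  have g: "denom s g" and h: "denom t h" unfolding g_def h_def by (rule denom_denom_of)+
  have E: "(g, g * s) \<approx> (h, h * t)"
    using e denom_of_pair unfolding embed_def g_def h_def by (simp add: canon_eq_iff)
  have lgh: "L g h" using pair_equiv_L[OF E] .
  obtain u v where w: "v * h = u * g" "is_meet le g h (u * g)"
    using meet_witness[where \<alpha>=g and \<beta>=h] by blast
  have lu: "L (u * g) g" using is_meet_L_of_le[OF w(2) L_imp_le[OF lgh]] .
  have "u * (g * s) = v * (h * t)" using pair_equiv_mult[OF E] w(1) by (metis mult.assoc)
  then have eq: "(u * g) * s = (u * g) * t" using w(1) by (metis mult.assoc)
  have "L ((u * g) * s) s" using denom_le_iff[OF g] L_imp_ge[OF lu] by blast
  moreover have "le h (u * g)" using lu lgh by (meson L_imp_ge L_imp_le le_trans)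
  then have "L ((u * g) * t) t" using denom_le_iff[OF h] by blast
  ultimately show "s = t" using L_left_cancel eq by blast
qed

lemma inv_embed: "inv_in quot_set quot_mult (embed s) = canon (denom_of s * s, denom_of s)"
proof -
  let ?g = "denom_of s"
  have "inv_in quot_set quot_mult (embed s) = canon (snd (embed s), fst (embed s))"
    using inv_in_quot embed_in_quot_set by blast
  moreover have "(fst (embed s), snd (embed s)) \<approx> (?g, ?g * s)"
    using canon[OF denom_of_pair] unfolding embed_def by simp
  then have "(snd (embed s), fst (embed s)) \<approx> (?g * s, ?g)"
    using pair_equiv_swap denom_of_pair canon[OF denom_of_pair] unfolding embed_def
    by (metis mem_pairs prod.collapse)
  moreover have "(snd (embed s), fst (embed s)) \<in> pairs"
    using canon[OF denom_of_pair] R_sym unfolding embed_def by (metis mem_pairs prod.collapse)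
  ultimately show ?thesis using denom_of_pair R_sym by (simp add: canon_eq_iff)
qed

lemma embed_mult_inv: "quot_mult (embed s) (inv_in quot_set quot_mult (embed s)) = canon (denom_of s, denom_of s)"
  unfolding inv_embed unfolding embed_def using denom_of_pair R_sym
  by (simp add: quot_mult_canon canon_eq_iff pair_mult_closed pair_mult_swap)

lemma inv_mult_embed: "quot_mult (inv_in quot_set quot_mult (embed s)) (embed s) = canon (s, s)"
proof -
  let ?g = "denom_of s"
  have "quot_mult (inv_in quot_set quot_mult (embed s)) (embed s) = canon (?g * s, ?g * s)"
    unfolding inv_embed unfolding embed_def using denom_of_pair R_sym
    by (simp add: quot_mult_canon canon_eq_iff pair_mult_closed pair_mult_swap)
  also have "\<dots> = canon (s, s)"
    using denom_denom_of unfolding denom_def by (simp add: canon_eq_iff pair_equiv_diag)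
  finally show ?thesis .
qed

lemma greenR_embed_iff: "greenR_in quot_set quot_mult (embed a) (embed b) \<longleftrightarrow> R a b"
proof -
  have "greenR_in quot_set quot_mult (embed a) (embed b) \<longleftrightarrow>
      canon (denom_of a, denom_of a) = canon (denom_of b, denom_of b)"
    using inv_semigroup.greenR_in_iff[OF inv_semigroup_quot embed_in_quot_set embed_in_quot_set]
    by (simp add: embed_mult_inv)
  also have "\<dots> \<longleftrightarrow> L (denom_of a) (denom_of b)" by (simp add: canon_eq_iff pair_equiv_diag)
  also have "\<dots> \<longleftrightarrow> R a b" using denom_L_iff[OF denom_denom_of denom_denom_of] .
  finally show ?thesis .
qed

lemma leL_embed_iff: "leL_in quot_set quot_mult (embed a) (embed b) \<longleftrightarrow> le a b"
proof -
  obtain w where w: "(a, a) \<odot> (b, b) = (w, w)" "is_meet le a b w" using pair_mult_diag by blast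
  have "quot_mult (canon (a, a)) (canon (b, b)) = canon (w, w)" using w(1) by (simp add: quot_mult_canon)
  then have "leL_in quot_set quot_mult (embed a) (embed b) \<longleftrightarrow> canon (a, a) = canon (w, w)"
    using inv_semigroup.leL_in_iff_idem[OF inv_semigroup_quot embed_in_quot_set embed_in_quot_set]
    by (simp add: inv_mult_embed)
  also have "\<dots> \<longleftrightarrow> L a w" by (simp add: canon_eq_iff pair_equiv_diag)
  also have "\<dots> \<longleftrightarrow> le a b"
    using w(2) unfolding is_meet_def Lprime_def by (meson le_refl le_trans)
  finally show ?thesis .
qed

lemma straight_embed:
  assumes q: "q \<in> quot_set"
  shows "\<exists>a b. q = quot_mult (inv_in quot_set quot_mult (embed a)) (embed b) \<and>
    greenR_in quot_set quot_mult (embed a) (embed b)"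
proof -
  obtain a b where ab: "q = (a, b)" by fastforce
  have r: "R a b" using quot_set_subset_pairs[OF q] ab by simp
  have "(denom_of a * a, denom_of a) \<odot> (denom_of b, denom_of b * b) \<approx> (a, b)"
    using pair_mult_denom_decomposition[OF r denom_denom_of denom_denom_of] .
  then have "quot_mult (inv_in quot_set quot_mult (embed a)) (embed b) = canon (a, b)"
    unfolding inv_embed unfolding embed_def using denom_of_pair R_sym r
    by (simp add: quot_mult_canon canon_eq_iff pair_mult_closed)
  also have "\<dots> = q" using canon_of_quot_set q ab by simp
  finally show ?thesis using greenR_embed_iff r by metis
qed

theorem sufficiency:
  "\<exists>(Q :: ('a \<times> 'a) set) m f. straight_left_I_order_embedding f Q m \<and>
     (\<forall>a b. greenR_in Q m (f a) (f b) \<longleftrightarrow> R a b) \<and>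
     (\<forall>a b. leL_in Q m (f a) (f b) \<longleftrightarrow> le a b)"
proof (intro exI conjI allI)
  show "straight_left_I_order_embedding embed quot_set quot_mult"
    unfolding straight_left_I_order_embedding_def
    using inverse_semigroup_quot inj_embed embed_in_quot_set embed_mult straight_embed by blast
qed (rule greenR_embed_iff leL_embed_iff)+

end

theorem theorem3p7:
  fixes R' :: "'a::semigroup_mult \<Rightarrow> 'a \<Rightarrow> bool"
    and le_l :: "'a \<Rightarrow> 'a \<Rightarrow> bool"
  shows "(\<exists>(Q :: ('a \<times> 'a) set) m f.
            straight_left_I_order_embedding f Q m \<and>
            (\<forall>a b. greenR_in Q m (f a) (f b) \<longleftrightarrow> R' a b) \<and>
            (\<forall>a b. leL_in Q m (f a) (f b) \<longleftrightarrow> le_l a b))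
    \<longleftrightarrow>
         (equivalence_rel R' \<and> left_compatible R' \<and>
          preorder_rel le_l \<and> meet_semilattice_classes le_l \<and>
          M1 R' le_l \<and> M2 le_l \<and> M3 le_l \<and> M4 R' \<and> M5 R' le_l \<and> M6 le_l)"
proof (rule iffI, goal_cases)
  case 1
  then show ?case
    by (elim exE conjE) (erule straight_embedding.necessity[OF straight_embedding.intro])
next
  case 2
  then have "straight_quotient_conditions R' le_l"
    by (intro straight_quotient_conditions.intro) blast+
  then show ?case by (rule straight_quotient_conditions.sufficiency)
qed

end
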